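(* Let $\xi=(\xi_1,\xi_2)\in\mathfrak p$ and $X\in\mathrm{St}(n,k)$. Then $(\beta(t),\widehat\beta(t),B(t),C(t))$, $t\in I$, is an extrinsic rolling of $T_X\mathrm{St}(n,k)$ over $\mathrm{St}(n,k)$ with respect to the Euclidean metric, whose development curve $\widehat\beta$ is a geodesic, where $$\beta(t)=t(\xi_1X-X\xi_2),\qquad \widehat\beta(t)=e^{t\xi_1}Xe^{-t\xi_2},$$ $$B(t)=d_{(e^{t\xi_1},e^{t\xi_2})}(\iota_X\circ\pi)\circ d_{(I_n,I_k)}L_{(e^{t\xi_1},e^{t\xi_2})}\circ\exp\!\big(-\tfrac12t\,\mathrm{pr}_{\mathfrak p}\circ\mathrm{ad}_{\xi}\big)\circ\big(d_{(I_n,I_k)}(\iota_X\circ\pi)|_{\mathfrak p}\big)^{-1},$$ $$C(t)=\Phi_{(e^{t\xi_1},e^{t\xi_2})}\circ\exp\!\big(-t\,P_X^\perp\circ f_{(\xi_1,\xi_2)}\big).$$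
   Context: $\mathrm{St}(n,k)=\{Y\in\mathbb{R}^{n\times k}:Y^\top Y=I_k\}$ with metric $\langle V,W\rangle=2\operatorname{tr}(V^\top W)$ ("Euclidean metric"). $G=O(n)\times O(k)$ acts on $\mathbb{R}^{n\times k}$ by $\Phi_{(R,\theta)}(V)=RV\theta^\top$; $H$ is the stabilizer of $X$, $\pi\colon G\to G/H$, $\iota_X((R,\theta)H)=RX\theta^\top$, $L_g$ left translation. On $\mathfrak g=\mathfrak{so}(n)\times\mathfrak{so}(k)$: $\langle(\Omega_1,\Psi_1),(\Omega_2,\Psi_2)\rangle=-\operatorname{tr}(\Omega_1\Omega_2)+2\operatorname{tr}(\Psi_1\Psi_2)$, $\mathfrak h=\{(\Omega,\eta):\Omega X=X\eta\}$, $\mathfrak p=\mathfrak h^\perp$, $\mathrm{pr}_{\mathfrak p}(\Omega,\eta)=(XX^\top\Omega+\Omega XX^\top-2X\eta X^\top,\,X^\top\Omega X-\eta)$, $\mathrm{ad}_\xi Z=[\xi,Z]$; $d_{(I_n,I_k)}(\iota_X\circ\pi)|_{\mathfrak p}\colon(\Omega,\eta)\mapsto\Omega X-X\eta$ is a linear isometry onto $T_X\mathrm{St}(n,k)$ with inverse $V\mapsto(VX^\top-XV^\top,X^\top V)$. $T_Y\mathrm{St}(n,k)=\{V:Y^\top V+V^\top Y=0\}$, $N_Y\mathrm{St}(n,k)$ its Frobenius-orthogonal complement, $P_X^\perp(V)=\tfrac12X(X^\top V+V^\top X)$, $f_{(\xi_1,\xi_2)}(V)=\xi_1V-V\xi_2$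 (the operator $P_X^\perp\circ f_{(\xi_1,\xi_2)}$ acts on $N_X\mathrm{St}(n,k)$). $T_X\mathrm{St}(n,k)$ is viewed as a submanifold with tangent space $T_X\mathrm{St}(n,k)$ and normal space $N_X\mathrm{St}(n,k)$ at each point. An extrinsic rolling of $M$ over $\widehat M$ is a quadruple of curves $\alpha$ in $M$, $\widehat\alpha$ in $\widehat M$ and linear isometries $A(t)\colon T_{\alpha(t)}M\to T_{\widehat\alpha(t)}\widehat M$, $C(t)\colon N_{\alpha(t)}M\to N_{\widehat\alpha(t)}\widehat M$ with $\dot{\widehat\alpha}=A\dot\alpha$, $A(t)Z(t)$ parallel along $\widehat\alpha$ iff $Z$ parallel along $\alpha$, and $C(t)Z(t)$ normal parallel along $\widehat\alpha$ iff $Z$ normal parallel along $\alpha$ (normal component of $\tfrac{d}{dt}Z$ vanishes). *)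

theory Defs
  imports "HOL-Analysis.Analysis"
begin

text \<open>Matrices are real^'c^'r (rows 'r, columns 'c); 'n and 'k are the finite index
types of size n and k.  The Frobenius inner product is the built-in inner product.\<close>

fun mpow :: "real^'n^'n \<Rightarrow> nat \<Rightarrow> real^'n^'n" where
  "mpow A 0 = mat 1"
| "mpow A (Suc i) = A ** mpow A i"

definition mexp :: "real^'n^'n \<Rightarrow> real^'n^'n" where
  "mexp A = (\<Sum>i. (1 / fact i) *\<^sub>R mpow A i)"

definition op_exp :: "('a::real_normed_vector \<Rightarrow> 'a) \<Rightarrow> 'a \<Rightarrow> 'a" where
  "op_exp L v = (\<Sum>i. (1 / fact i) *\<^sub>R (L ^^ i) v)"

definition Stiefel :: "(real^'k^'n) set" where
  "Stiefel = {Y. transpose Y ** Y = mat 1}"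

definition tanSt :: "real^'k^'n \<Rightarrow> (real^'k^'n) set" where
  "tanSt Y = {V. transpose Y ** V + transpose V ** Y = 0}"

definition orth :: "('a::real_inner) set \<Rightarrow> 'a set" where
  "orth S = {v. \<forall>w\<in>S. v \<bullet> w = 0}"

definition norSt :: "real^'k^'n \<Rightarrow> (real^'k^'n) set" where
  "norSt Y = orth (tanSt Y)"

definition eucl_metric :: "real^'k^'n \<Rightarrow> real^'k^'n \<Rightarrow> real" where
  "eucl_metric V W = 2 * trace (transpose V ** W)"

definition lin_isom_on ::
  "(real^'k^'n \<Rightarrow> real^'k^'n) \<Rightarrow> (real^'k^'n) set \<Rightarrow> (real^'k^'n) set \<Rightarrow> bool" where
  "lin_isom_on A S S' \<longleftrightarrow>
     (\<forall>u\<in>S. \<forall>v\<in>S. A (u + v) = A u + A v) \<and>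
     (\<forall>c. \<forall>u\<in>S. A (c *\<^sub>R u) = c *\<^sub>R A u) \<and>
     A ` S = S' \<and>
     (\<forall>u\<in>S. \<forall>v\<in>S. eucl_metric (A u) (A v) = eucl_metric u v)"

text \<open>A submanifold is given by its point set and tangent-space map T; its normal
space at y is the Frobenius-orthogonal complement of T y.
Z is parallel along \<alpha> (Levi-Civita connection of the induced metric):
Z is a smooth tangent field whose derivative has vanishing tangential component.\<close>
definition parallel_along ::
  "(real^'k^'n \<Rightarrow> (real^'k^'n) set) \<Rightarrow> real set \<Rightarrow> (real \<Rightarrow> real^'k^'n)
     \<Rightarrow> (real \<Rightarrow> real^'k^'n) \<Rightarrow> bool" where
  "parallel_along T I \<alpha> Z \<longleftrightarrow>
     (\<exists>Z'. \<forall>t\<in>I. Z t \<in> T (\<alpha> t) \<and> (Z has_vector_derivative Z' t) (at t within I)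
                 \<and> Z' t \<in> orth (T (\<alpha> t)))"

definition normal_parallel_along ::
  "(real^'k^'n \<Rightarrow> (real^'k^'n) set) \<Rightarrow> real set \<Rightarrow> (real \<Rightarrow> real^'k^'n)
     \<Rightarrow> (real \<Rightarrow> real^'k^'n) \<Rightarrow> bool" where
  "normal_parallel_along T I \<alpha> Z \<longleftrightarrow>
     (\<exists>Z'. \<forall>t\<in>I. Z t \<in> orth (T (\<alpha> t)) \<and> (Z has_vector_derivative Z' t) (at t within I)
                 \<and> Z' t \<in> orth (orth (T (\<alpha> t))))"

definition extrinsic_rolling ::
  "(real^'k^'n) set \<Rightarrow> (real^'k^'n \<Rightarrow> (real^'k^'n) set) \<Rightarrow>
   (real^'k^'n) set \<Rightarrow> (real^'k^'n \<Rightarrow> (real^'k^'n) set) \<Rightarrow> real set \<Rightarrow>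
   (real \<Rightarrow> real^'k^'n) \<Rightarrow> (real \<Rightarrow> real^'k^'n) \<Rightarrow>
   (real \<Rightarrow> real^'k^'n \<Rightarrow> real^'k^'n) \<Rightarrow> (real \<Rightarrow> real^'k^'n \<Rightarrow> real^'k^'n) \<Rightarrow> bool" where
  "extrinsic_rolling M TM Mh TMh I \<alpha> \<alpha>h A C \<longleftrightarrow>
     (\<forall>t\<in>I. \<alpha> t \<in> M \<and> \<alpha>h t \<in> Mh) \<and>
     (\<forall>t\<in>I. lin_isom_on (A t) (TM (\<alpha> t)) (TMh (\<alpha>h t))) \<and>
     (\<forall>t\<in>I. lin_isom_on (C t) (orth (TM (\<alpha> t))) (orth (TMh (\<alpha>h t)))) \<and>
     (\<exists>\<alpha>' \<alpha>h'. \<forall>t\<in>I. (\<alpha> has_vector_derivative \<alpha>' t) (at t within I) \<and>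
                      (\<alpha>h has_vector_derivative \<alpha>h' t) (at t within I) \<and>
                      \<alpha>h' t = A t (\<alpha>' t)) \<and>
     (\<forall>Z. (\<forall>t\<in>I. Z t \<in> TM (\<alpha> t)) \<longrightarrow>
          (parallel_along TMh I \<alpha>h (\<lambda>t. A t (Z t)) \<longleftrightarrow> parallel_along TM I \<alpha> Z)) \<and>
     (\<forall>Z. (\<forall>t\<in>I. Z t \<in> orth (TM (\<alpha> t))) \<longrightarrow>
          (normal_parallel_along TMh I \<alpha>h (\<lambda>t. C t (Z t)) \<longleftrightarrow>
           normal_parallel_along TM I \<alpha> Z))"

definition geodesic_St :: "real set \<Rightarrow> (real \<Rightarrow> real^'k^'n) \<Rightarrow> bool" where
  "geodesic_St I \<gamma> \<longleftrightarrow> (\<forall>t\<in>I. \<gamma> t \<in> Stiefel) \<and>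
     (\<exists>\<gamma>' \<gamma>''. \<forall>t\<in>I. (\<gamma> has_vector_derivative \<gamma>' t) (at t within I) \<and>
                     (\<gamma>' has_vector_derivative \<gamma>'' t) (at t within I) \<and>
                     \<gamma>'' t \<in> orth (tanSt (\<gamma> t)))"

definition skew :: "(real^'n^'n) set" where
  "skew = {\<Omega>. transpose \<Omega> = - \<Omega>}"

definition g_inner :: "(real^'n^'n) \<times> (real^'k^'k) \<Rightarrow> (real^'n^'n) \<times> (real^'k^'k) \<Rightarrow> real" where
  "g_inner a b = - trace (fst a ** fst b) + 2 * trace (snd a ** snd b)"

definition hX :: "real^'k^'n \<Rightarrow> ((real^'n^'n) \<times> (real^'k^'k)) set" where
  "hX X = {(\<Omega>, \<eta>). \<Omega> \<in> skew \<and> \<eta> \<in> skew \<and> \<Omega> ** X = X ** \<eta>}"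

definition pX :: "real^'k^'n \<Rightarrow> ((real^'n^'n) \<times> (real^'k^'k)) set" where
  "pX X = {\<zeta>. fst \<zeta> \<in> skew \<and> snd \<zeta> \<in> skew \<and> (\<forall>\<theta>\<in>hX X. g_inner \<zeta> \<theta> = 0)}"

definition pr_p :: "real^'k^'n \<Rightarrow> (real^'n^'n) \<times> (real^'k^'k) \<Rightarrow> (real^'n^'n) \<times> (real^'k^'k)" where
  "pr_p X z = (let \<Omega> = fst z; \<eta> = snd z in
     (X ** transpose X ** \<Omega> + \<Omega> ** X ** transpose X - 2 *\<^sub>R (X ** \<eta> ** transpose X),
      transpose X ** \<Omega> ** X - \<eta>))"

definition ad :: "(real^'n^'n) \<times> (real^'k^'k) \<Rightarrow> (real^'n^'n) \<times> (real^'k^'k) \<Rightarrow> (real^'n^'n) \<times> (real^'k^'k)" where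
  "ad a b = (fst a ** fst b - fst b ** fst a, snd a ** snd b - snd b ** snd a)"

definition gmul :: "(real^'n^'n) \<times> (real^'k^'k) \<Rightarrow> (real^'n^'n) \<times> (real^'k^'k) \<Rightarrow> (real^'n^'n) \<times> (real^'k^'k)" where
  "gmul a b = (fst a ** fst b, snd a ** snd b)"

definition iota_pi :: "real^'k^'n \<Rightarrow> (real^'n^'n) \<times> (real^'k^'k) \<Rightarrow> real^'k^'n" where
  "iota_pi X g = fst g ** X ** transpose (snd g)"

definition Phi :: "(real^'n^'n) \<times> (real^'k^'k) \<Rightarrow> real^'k^'n \<Rightarrow> real^'k^'n" where
  "Phi g V = fst g ** V ** transpose (snd g)"

definition PperpX :: "real^'k^'n \<Rightarrow> real^'k^'n \<Rightarrow> real^'k^'n" where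
  "PperpX X V = (1/2) *\<^sub>R (X ** (transpose X ** V + transpose V ** X))"

definition f_op :: "(real^'n^'n) \<times> (real^'k^'k) \<Rightarrow> real^'k^'n \<Rightarrow> real^'k^'n" where
  "f_op \<xi> V = fst \<xi> ** V - V ** snd \<xi>"

end

(*
  Write g(t) = (e^(t xi1), e^(t xi2)). Both B(t) and C(t) are Phi_g(t), an isometry of R^(n x k)
  mapping tangent and normal spaces at X to those at the development point Phi_g(t) X, composed
  with the exponential of an operator that is skew for the relevant inner product: -1/2 pr_p o ad_xi
  on p, which the differential of iota_X o pi identifies isometrically with T_X St(n,k), and
  -P_X^perp o f_xi on N_X St(n,k). Hence both are linear isometries onto the right spaces.

  Differentiating B(t) Z(t) (resp. C(t) Z(t)) gives the transport of Z' plus a drift term. For B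
  the drift is Phi_g(t) of f_xi(Omega X - X eta) - 1/2 ([xi1, Omega] X - X [xi2, eta]), where
  (Omega, eta) in p are the rotated coordinates of Z(t), and an explicit matrix identity shows that
  it is normal. For C the drift is Phi_g(t) of f_xi(W) - P_X^perp f_xi(W), which is tangent. Hence
  the transported field is (normal) parallel iff Z' = 0, i.e. iff Z is (normal) parallel in the
  flat space T_X St(n,k).
  The development curve Phi_g(t) X has acceleration Phi_g(t) (f_xi (f_xi X)), which is normal:
  it is a geodesic.
*)
theory Submission
  imports Defs
begin

section \<open>Exponentials of linear operators\<close>

text \<open>The library puts no multiplication on \<open>'a \<Rightarrow>\<^sub>L 'a\<close>. This copy of it, with composition as
  product, is a Banach algebra, so the generic \<^const>\<open>exp\<close> and its laws apply to operators.\<close>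

typedef (overloaded) ('a::euclidean_space) endo = "UNIV :: ('a \<Rightarrow>\<^sub>L 'a) set"
  morphisms blinfun_of_endo Endo by simp

setup_lifting type_definition_endo

instantiation endo :: (euclidean_space) real_normed_algebra_1
begin

lift_definition zero_endo :: "'a endo" is 0 .
lift_definition one_endo :: "'a endo" is id_blinfun .
lift_definition plus_endo :: "'a endo \<Rightarrow> 'a endo \<Rightarrow> 'a endo" is "(+)" .
lift_definition minus_endo :: "'a endo \<Rightarrow> 'a endo \<Rightarrow> 'a endo" is "(-)" .
lift_definition uminus_endo :: "'a endo \<Rightarrow> 'a endo" is uminus .
lift_definition times_endo :: "'a endo \<Rightarrow> 'a endo \<Rightarrow> 'a endo" is "(o\<^sub>L)" .
lift_definition scaleR_endo :: "real \<Rightarrow> 'a endo \<Rightarrow> 'a endo" is scaleR .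
lift_definition norm_endo :: "'a endo \<Rightarrow> real" is norm .
definition dist_endo :: "'a endo \<Rightarrow> 'a endo \<Rightarrow> real" where "dist_endo a b = norm (a - b)"
definition uniformity_endo :: "('a endo \<times> 'a endo) filter"
  where "uniformity_endo = (INF e\<in>{0<..}. principal {(x, y). dist x y < e})"
definition open_endo :: "'a endo set \<Rightarrow> bool"
  where "open_endo S = (\<forall>x\<in>S. \<forall>\<^sub>F (x', y) in uniformity. x' = x \<longrightarrow> y \<in> S)"
definition sgn_endo :: "'a endo \<Rightarrow> 'a endo" where "sgn_endo x = scaleR (inverse (norm x)) x"

instance
proof
  fix a b c :: "'a endo" and r s :: real
  show "a * b * c = a * (b * c)" by transfer (auto intro!: blinfun_eqI)
  show "(a + b) * c = a * c + b * c" by transfer (auto intro!: blinfun_eqI simp: blinfun.bilinear_simps)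
  show "a * (b + c) = a * b + a * c" by transfer (auto intro!: blinfun_eqI simp: blinfun.bilinear_simps)
  show "1 * a = a" by transfer (auto intro!: blinfun_eqI)
  show "a * 1 = a" by transfer (auto intro!: blinfun_eqI)
  show "(0::'a endo) \<noteq> 1"
  proof transfer
    obtain v :: 'a where "v \<noteq> 0" using SOME_Basis nonzero_Basis by blast
    then show "(0::'a\<Rightarrow>\<^sub>L'a) \<noteq> id_blinfun" by (metis blinfun_apply_id_blinfun blinfun.zero_left)
  qed
  show "a + b + c = a + (b + c)" by transfer simp
  show "a + b = b + a" by transfer simp
  show "0 + a = a" by transfer simp
  show "- a + a = 0" by transfer simp
  show "a - b = a + - b" by transfer simp
  show "r *\<^sub>R (a + b) = r *\<^sub>R a + r *\<^sub>R b" by transfer (simp add: scaleR_right_distrib)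
  show "(r + s) *\<^sub>R a = r *\<^sub>R a + s *\<^sub>R a" by transfer (simp add: scaleR_left_distrib)
  show "r *\<^sub>R s *\<^sub>R a = (r * s) *\<^sub>R a" by transfer simp
  show "1 *\<^sub>R a = a" by transfer simp
  show "r *\<^sub>R a * b = r *\<^sub>R (a * b)" by transfer (auto intro!: blinfun_eqI simp: blinfun.bilinear_simps)
  show "a * r *\<^sub>R b = r *\<^sub>R (a * b)" by transfer (auto intro!: blinfun_eqI simp: blinfun.bilinear_simps)
  show "dist a b = norm (a - b)" by (simp add: dist_endo_def)
  show "(uniformity :: ('a endo \<times> 'a endo) filter) = (INF e\<in>{0<..}. principal {(x, y). dist x y < e})"
    by (simp add: uniformity_endo_def)
  show "norm (a * b) \<le> norm a * norm b" by transfer (rule norm_blinfun_compose)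
  show "norm (1::'a endo) = 1" by transfer simp
  show "(norm a = 0) = (a = 0)" by transfer simp
  show "norm (a + b) \<le> norm a + norm b" by transfer (rule norm_triangle_ineq)
  show "norm (r *\<^sub>R a) = \<bar>r\<bar> * norm a" by transfer simp
  show "sgn a = inverse (norm a) *\<^sub>R a" by (simp add: sgn_endo_def)
next
  fix U :: "'a endo set"
  show "open U = (\<forall>x\<in>U. \<forall>\<^sub>F (x', y) in uniformity. x' = x \<longrightarrow> y \<in> U)"
    by (simp add: open_endo_def)
qed

end

lemma norm_blinfun_of_endo [simp]: "norm (blinfun_of_endo x) = norm x" by transfer simp
lemma blinfun_of_endo_add [simp]: "blinfun_of_endo (x + y) = blinfun_of_endo x + blinfun_of_endo y"
  by transfer simp
lemma blinfun_of_endo_diff [simp]: "blinfun_of_endo (x - y) = blinfun_of_endo x - blinfun_of_endo y"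
  by transfer simp
lemma blinfun_of_endo_scaleR [simp]: "blinfun_of_endo (r *\<^sub>R x) = r *\<^sub>R blinfun_of_endo x"
  by transfer simp
lemma blinfun_of_endo_mult [simp]: "blinfun_of_endo (x * y) = blinfun_of_endo x o\<^sub>L blinfun_of_endo y"
  by transfer simp
lemma blinfun_of_endo_one [simp]: "blinfun_of_endo 1 = id_blinfun" by transfer simp

lemma blinfun_of_endo_zero [simp]: "blinfun_of_endo 0 = 0" by transfer simp
lemma blinfun_of_endo_Endo [simp]: "blinfun_of_endo (Endo f) = f" by (simp add: Endo_inverse)

lemma bounded_linear_blinfun_of_endo: "bounded_linear blinfun_of_endo"
  by (rule bounded_linear_intro[where K=1]) auto

instance endo :: (euclidean_space) banach
proof
  fix X :: "nat \<Rightarrow> 'a endo"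
  assume "Cauchy X"
  then have "Cauchy (\<lambda>n. blinfun_of_endo (X n))"
    by (simp add: Cauchy_def dist_norm flip: blinfun_of_endo_diff)
  then obtain L where L: "(\<lambda>n. blinfun_of_endo (X n)) \<longlonglongrightarrow> L"
    using convergent_eq_Cauchy by blast
  have "X \<longlonglongrightarrow> Endo L"
  proof (rule LIMSEQ_I)
    fix r :: real assume "0 < r"
    from LIMSEQ_D[OF L this] obtain N where "\<forall>n\<ge>N. norm (blinfun_of_endo (X n) - L) < r" by blast
    then show "\<exists>N. \<forall>n\<ge>N. norm (X n - Endo L) < r"
      by (metis blinfun_of_endo_Endo blinfun_of_endo_diff norm_blinfun_of_endo)
  qed
  then show "convergent X" by (auto simp: convergent_def)
qed

definition endo_apply :: "'a::euclidean_space endo \<Rightarrow> 'a \<Rightarrow> 'a" where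
  "endo_apply x v = blinfun_apply (blinfun_of_endo x) v"

definition endo_of :: "('a::euclidean_space \<Rightarrow> 'a) \<Rightarrow> 'a endo" where
  "endo_of f = Endo (Blinfun f)"

lemma bounded_bilinear_endo_apply: "bounded_bilinear endo_apply"
  unfolding endo_apply_def
  using bounded_bilinear.comp1[OF bounded_bilinear_blinfun_apply bounded_linear_blinfun_of_endo]
  by simp

lemma endo_apply_mult [simp]: "endo_apply (x * y) v = endo_apply x (endo_apply y v)"
  by (simp add: endo_apply_def)
lemma endo_apply_one [simp]: "endo_apply 1 v = v"
  by (simp add: endo_apply_def)
lemma endo_apply_scaleR_left [simp]: "endo_apply (r *\<^sub>R x) v = r *\<^sub>R endo_apply x v"
  by (simp add: endo_apply_def blinfun.bilinear_simps)

lemma endo_apply_add_left [simp]: "endo_apply (x + y) v = endo_apply x v + endo_apply y v"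
  by (simp add: endo_apply_def blinfun.bilinear_simps)
lemma endo_apply_zero_left [simp]: "endo_apply 0 v = 0"
  by (simp add: endo_apply_def)
lemma endo_apply_zero_right [simp]: "endo_apply x 0 = 0"
  by (simp add: endo_apply_def)

lemma linear_endo_apply: "linear (endo_apply x)"
  unfolding endo_apply_def using blinfun.bounded_linear_right bounded_linear.linear by blast

lemma endo_apply_power: "endo_apply (x ^ n) v = (endo_apply x ^^ n) v"
  by (induct n arbitrary: v) auto

lemma endo_eqI: "(\<And>v. endo_apply x v = endo_apply y v) \<Longrightarrow> x = y"
  unfolding endo_apply_def by (metis blinfun_eqI blinfun_of_endo_inject)

lemma endo_apply_endo_of: "linear f \<Longrightarrow> endo_apply (endo_of f) = f"
  by (simp add: fun_eq_iff endo_apply_def endo_of_def bounded_linear_Blinfun_apply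
      linear_conv_bounded_linear)

lemma endo_apply_exp: "endo_apply (exp x) v = (\<Sum>n. (1 / fact n) *\<^sub>R endo_apply (x ^ n) v)"
proof -
  have "bounded_linear (\<lambda>x. endo_apply x v)"
    by (rule bounded_bilinear.bounded_linear_left[OF bounded_bilinear_endo_apply])
  from bounded_linear.suminf[OF this summable_exp_generic[of x]]
  show ?thesis by (simp add: exp_def divide_inverse_commute)
qed

lemma op_exp_eq_endo_exp: "linear L \<Longrightarrow> op_exp L v = endo_apply (exp (endo_of L)) v"
  by (simp add: op_exp_def endo_apply_exp endo_apply_power endo_apply_endo_of)

lemma endo_exp_apply_in_subspace:
  fixes x :: "'a::euclidean_space endo"
  assumes S: "subspace S" and invariant: "\<And>v. v \<in> S \<Longrightarrow> endo_apply x v \<in> S" and v: "v \<in> S"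
  shows "endo_apply (exp x) v \<in> S"
proof -
  have "bounded_linear (\<lambda>y. endo_apply y v)"
    by (rule bounded_bilinear.bounded_linear_left[OF bounded_bilinear_endo_apply])
  from bounded_linear.sums[OF this summable_sums[OF summable_exp_generic[of x]]]
  have "(\<lambda>N. \<Sum>n<N. endo_apply (x ^ n /\<^sub>R fact n) v) \<longlonglongrightarrow> endo_apply (exp x) v"
    by (simp add: sums_def exp_def)
  moreover have "endo_apply (x ^ n) v \<in> S" for n
    by (induct n) (simp_all add: v invariant)
  then have "(\<Sum>n<N. endo_apply (x ^ n /\<^sub>R fact n) v) \<in> S" for N
    by (intro subspace_sum[OF S]) (simp add: subspace_mul[OF S])
  ultimately show ?thesis
    by (rule closed_sequentially[OF closed_subspace[OF S], rotated])
qed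

lemma endo_exp_apply_minus_cancel [simp]:
  "endo_apply (exp (- x)) (endo_apply (exp x) v) = v"
  "endo_apply (exp x) (endo_apply (exp (- x)) v) = v"
proof -
  have "exp (- x) * exp x = 1" "exp x * exp (- x) = 1"
    using exp_minus_inverse[of "- x"] exp_minus_inverse[of x] by simp_all
  then show "endo_apply (exp (- x)) (endo_apply (exp x) v) = v"
    "endo_apply (exp x) (endo_apply (exp (- x)) v) = v"
    by (simp_all flip: endo_apply_mult)
qed

lemma endo_exp_apply_eq_self: "endo_apply x v = 0 \<Longrightarrow> endo_apply (exp x) v = v"
proof -
  assume "endo_apply x v = 0"
  then have "(1 / fact n) *\<^sub>R endo_apply (x ^ n) v = 0" if "n \<notin> {0}" for n
    using that by (cases n) (simp_all only: power_Suc2 endo_apply_mult, auto)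
  then show ?thesis
    unfolding endo_apply_exp by (subst suminf_finite[of "{0}"]) auto
qed

lemma has_vector_derivative_endo_exp_apply:
  fixes x :: "'a::euclidean_space endo"
  assumes "(z has_vector_derivative z') (at t)"
  shows "((\<lambda>s. endo_apply (exp (s *\<^sub>R x)) (z s)) has_vector_derivative
           endo_apply x (endo_apply (exp (t *\<^sub>R x)) (z t)) + endo_apply (exp (t *\<^sub>R x)) z') (at t)"
  using bounded_bilinear.has_vector_derivative[OF bounded_bilinear_endo_apply
      exp_scaleR_has_vector_derivative_left assms]
  by (simp add: add.commute)

lemma endo_exp_apply_preserves_bilinear:
  fixes x :: "'a::euclidean_space endo" and q :: "'a \<Rightarrow> 'a \<Rightarrow> real"
  assumes q: "bounded_bilinear q" and S: "subspace S"
    and invariant: "\<And>v. v \<in> S \<Longrightarrow> endo_apply x v \<in> S"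
    and skew: "\<And>u v. u \<in> S \<Longrightarrow> v \<in> S \<Longrightarrow> q (endo_apply x u) v + q u (endo_apply x v) = 0"
    and u: "u \<in> S" and v: "v \<in> S"
  shows "q (endo_apply (exp (s *\<^sub>R x)) u) (endo_apply (exp (s *\<^sub>R x)) v) = q u v"
proof -
  let ?e = "\<lambda>s w. endo_apply (exp (s *\<^sub>R x)) w"
  have "DERIV (\<lambda>s. q (?e s u) (?e s v)) r :> 0" for r
  proof -
    have in_S: "?e r w \<in> S" if "w \<in> S" for w
      using endo_exp_apply_in_subspace[OF S _ that] invariant subspace_mul[OF S] by simp
    have "((\<lambda>s. ?e s w) has_vector_derivative endo_apply x (?e r w)) (at r)" for w
      using has_vector_derivative_endo_exp_apply[OF has_vector_derivative_const] by simp
    from bounded_bilinear.has_vector_derivative[OF q this[of u] this[of v]]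
    show ?thesis
      using skew[OF in_S[OF u] in_S[OF v]]
      by (simp add: has_real_derivative_iff_has_vector_derivative add.commute)
  qed
  then have "q (?e s u) (?e s v) = q (?e 0 u) (?e 0 v)"
    by (intro DERIV_isconst_all) blast
  then show ?thesis by simp
qed

section \<open>Matrix algebra and the matrix exponential\<close>

lemma matrix_add_rdistrib: "((A::real^'m^'n) + B) ** C = A ** C + B ** C"
  by (vector matrix_matrix_mult_def sum.distrib[symmetric] field_simps)
lemma matrix_diff_ldistrib: "(A::real^'m^'n) ** (B - C) = A ** B - A ** C"
  by (vector matrix_matrix_mult_def sum_subtractf[symmetric] field_simps)
lemma matrix_diff_rdistrib: "((A::real^'m^'n) - B) ** C = A ** C - B ** C"
  by (vector matrix_matrix_mult_def sum_subtractf[symmetric] field_simps)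
lemma matrix_neg_left [simp]: "(- (A::real^'m^'n)) ** C = - (A ** C)"
  by (vector matrix_matrix_mult_def sum_negf[symmetric])
lemma matrix_neg_right [simp]: "(A::real^'m^'n) ** (- C) = - (A ** C)"
  by (vector matrix_matrix_mult_def sum_negf[symmetric])
lemma matrix_scaleR_left [simp]: "(r *\<^sub>R (A::real^'m^'n)) ** C = r *\<^sub>R (A ** C)"
  by (simp add: scalar_matrix_assoc)
lemma matrix_scaleR_right [simp]: "(A::real^'m^'n) ** (r *\<^sub>R C) = r *\<^sub>R (A ** C)"
  by (simp add: matrix_scalar_ac)

lemma matrix_mult_zero_right [simp]: "(A::real^'m^'n) ** (0::real^'p^'m) = 0"
  by (simp add: matrix_matrix_mult_def vec_eq_iff)

text \<open>\<open>algebra_simps\<close> turns \<open>A + A\<close> into \<open>2 * A\<close>, a componentwise product of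
  \<^typ>\<open>real^'m^'n\<close>; this rule turns it back into a scaling.\<close>

lemma vec_times_2: "2 * (A::real^'m^'n) = 2 *\<^sub>R A" "A * 2 = 2 *\<^sub>R A"
  by (simp_all add: vec_eq_iff)

lemmas matrix_distrib =
  matrix_add_ldistrib matrix_add_rdistrib matrix_diff_ldistrib matrix_diff_rdistrib

lemma transpose_add [simp]: "transpose ((A::real^'m^'n) + B) = transpose A + transpose B"
  by (vector transpose_def)
lemma transpose_diff [simp]: "transpose ((A::real^'m^'n) - B) = transpose A - transpose B"
  by (vector transpose_def)
lemma transpose_neg [simp]: "transpose (- (A::real^'m^'n)) = - transpose A"
  by (vector transpose_def)
lemma transpose_zero [simp]: "transpose (0::real^'m^'n) = 0"
  by (vector transpose_def)
lemma transpose_scaleR [simp]: "transpose (r *\<^sub>R (A::real^'m^'n)) = r *\<^sub>R transpose A"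
  by (rule transpose_scalar)

lemma bounded_linear_transpose: "bounded_linear (transpose :: real^'m^'n \<Rightarrow> real^'n^'m)"
  by (simp add: linear_conv_bounded_linear[symmetric] linearI)

lemma bounded_bilinear_matrix_mult:
  "bounded_bilinear ((**) :: real^'m^'n \<Rightarrow> real^'p^'m \<Rightarrow> real^'p^'n)"
  by (simp add: bilinear_conv_bounded_bilinear[symmetric] bilinear_def linearI matrix_distrib)

lemma has_vector_derivative_matrix_mult:
  fixes P :: "real \<Rightarrow> real^'m^'n" and Q :: "real \<Rightarrow> real^'p^'m"
  assumes "(P has_vector_derivative P') (at t)" "(Q has_vector_derivative Q') (at t)"
  shows "((\<lambda>s. P s ** Q s) has_vector_derivative (P t ** Q' + P' ** Q t)) (at t)"
  using bounded_bilinear.has_vector_derivative[OF bounded_bilinear_matrix_mult assms] .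

lemma inner_matrix_mult_left:
  "((A::real^'m^'n) ** (B::real^'p^'m)) \<bullet> C = B \<bullet> (transpose A ** C)"
proof -
  have "(A ** B) \<bullet> C = (\<Sum>i\<in>UNIV. \<Sum>j\<in>UNIV. \<Sum>l\<in>UNIV. A$i$l * B$l$j * C$i$j)"
    by (simp add: inner_vec_def matrix_matrix_mult_def sum_distrib_right)
  also have "\<dots> = (\<Sum>i\<in>UNIV. \<Sum>l\<in>UNIV. \<Sum>j\<in>UNIV. A$i$l * B$l$j * C$i$j)"
    by (intro sum.cong refl sum.swap)
  also have "\<dots> = (\<Sum>l\<in>UNIV. \<Sum>i\<in>UNIV. \<Sum>j\<in>UNIV. A$i$l * B$l$j * C$i$j)"
    by (rule sum.swap)
  also have "\<dots> = (\<Sum>l\<in>UNIV. \<Sum>j\<in>UNIV. \<Sum>i\<in>UNIV. A$i$l * B$l$j * C$i$j)"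
    by (intro sum.cong refl sum.swap)
  also have "\<dots> = B \<bullet> (transpose A ** C)"
    by (simp add: inner_vec_def matrix_matrix_mult_def transpose_def sum_distrib_left mult_ac)
  finally show ?thesis .
qed

lemma inner_transpose: "transpose (A::real^'m^'n) \<bullet> transpose B = A \<bullet> B"
  by (simp add: inner_vec_def transpose_def) (rule sum.swap)

lemma inner_matrix_mult_right:
  "((A::real^'m^'n) ** (B::real^'p^'m)) \<bullet> C = A \<bullet> (C ** transpose B)"
proof -
  have "(A ** B) \<bullet> C = (transpose B ** transpose A) \<bullet> transpose C"
    by (simp only: inner_transpose matrix_transpose_mul[symmetric])
  also have "\<dots> = transpose A \<bullet> transpose (C ** transpose B)"
    by (simp only: inner_matrix_mult_left matrix_transpose_mul transpose_transpose)
  finally show ?thesis by (simp only: inner_transpose)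
qed

lemma trace_transpose_mult: "trace (transpose (A::real^'m^'n) ** B) = A \<bullet> B"
  by (simp add: trace_def matrix_matrix_mult_def transpose_def inner_vec_def) (rule sum.swap)

lemma inner_skew_symmetric_eq_0:
  assumes "transpose (A::real^'n^'n) = - A" "transpose S = S" shows "A \<bullet> S = 0"
proof -
  have "A \<bullet> S = transpose A \<bullet> transpose S" by (simp add: inner_transpose)
  also have "\<dots> = - (A \<bullet> S)" using assms by simp
  finally show ?thesis by simp
qed

lemma trace_skew_mult: "transpose (A::real^'n^'n) = - A \<Longrightarrow> trace (A ** B) = - (A \<bullet> B)"
  by (metis trace_transpose_mult transpose_transpose inner_minus_left transpose_neg)

lemma inner_mult_mult_transpose:
  "(W::real^'n^'n) \<bullet> ((Y::real^'k^'n) ** D ** transpose Y) = (transpose Y ** W ** Y) \<bullet> D"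
proof -
  have "W \<bullet> (Y ** D ** transpose Y) = (Y ** D) \<bullet> (W ** Y)"
    by (simp only: inner_commute[of W] inner_matrix_mult_right transpose_transpose)
  also have "\<dots> = (transpose Y ** W ** Y) \<bullet> D"
    by (simp add: inner_matrix_mult_left inner_commute matrix_mul_assoc)
  finally show ?thesis .
qed

lemma trace_scaleR: "trace (r *\<^sub>R (A::real^'n^'n)) = r * trace A"
  by (simp add: trace_def sum_distrib_left)

lemma trace_mult_cyclic: "trace ((A::real^'n^'n) ** B ** C) = trace (B ** C ** A)"
  by (metis matrix_mul_assoc trace_mul_sym)

text \<open>Transport along \<open>A \<mapsto> (v \<mapsto> A v)\<close> identifies square matrices with the Banach algebra of
  endomorphisms, so \<^const>\<open>mexp\<close> inherits the properties of \<^const>\<open>exp\<close>.\<close>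

definition endo_of_matrix :: "real^'n^'n \<Rightarrow> (real^'n) endo" where
  "endo_of_matrix A = endo_of ((*v) A)"

definition matrix_of_endo :: "(real^'n) endo \<Rightarrow> real^'n^'n" where
  "matrix_of_endo x = matrix (endo_apply x)"

lemma endo_apply_endo_of_matrix [simp]: "endo_apply (endo_of_matrix A) v = A *v v"
  by (simp add: endo_of_matrix_def endo_apply_endo_of)

lemma endo_of_matrix_mult: "endo_of_matrix (A ** B) = endo_of_matrix A * endo_of_matrix B"
  by (rule endo_eqI) (simp add: matrix_vector_mul_assoc)
lemma endo_of_matrix_one: "endo_of_matrix (mat 1) = 1"
  by (rule endo_eqI) simp
lemma endo_of_matrix_scaleR: "endo_of_matrix (r *\<^sub>R A) = r *\<^sub>R endo_of_matrix A"
  by (rule endo_eqI) (simp add: scaleR_matrix_vector_assoc)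
lemma endo_of_matrix_add: "endo_of_matrix (A + B) = endo_of_matrix A + endo_of_matrix B"
  by (rule endo_eqI) (simp add: matrix_vector_mult_add_rdistrib)
lemma endo_of_matrix_zero: "endo_of_matrix 0 = 0"
  by (rule endo_eqI) simp

lemma matrix_of_endo_of_matrix [simp]: "matrix_of_endo (endo_of_matrix A) = A"
  by (simp add: matrix_of_endo_def endo_of_matrix_def endo_apply_endo_of)

lemma endo_of_matrix_of_endo [simp]: "endo_of_matrix (matrix_of_endo x) = x"
  by (rule endo_eqI) (simp add: matrix_of_endo_def linear_endo_apply matrix_works)

lemma endo_of_matrix_inject: "endo_of_matrix A = endo_of_matrix B \<Longrightarrow> A = B"
  by (metis matrix_of_endo_of_matrix)

lemma endo_of_matrix_mpow: "endo_of_matrix (mpow A i) = endo_of_matrix A ^ i"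
  by (induct i) (simp_all add: endo_of_matrix_one endo_of_matrix_mult)

lemma bounded_linear_matrix_of_endo:
  "bounded_linear (matrix_of_endo :: (real^'n) endo \<Rightarrow> real^'n^'n)"
proof -
  have linear: "linear (matrix_of_endo :: (real^'n) endo \<Rightarrow> real^'n^'n)"
    by (rule linearI)
      (simp_all add: matrix_of_endo_def matrix_def vec_eq_iff endo_apply_def blinfun.bilinear_simps)
  have "norm (matrix_of_endo x) \<le> norm x * (real CARD('n) * real CARD('n))" for x :: "(real^'n) endo"
  proof -
    have "onorm (endo_apply x) = norm x"
      unfolding endo_apply_def by (metis norm_blinfun_of_endo norm_blinfun.rep_eq)
    then have entry: "\<bar>matrix_of_endo x $ i $ j\<bar> \<le> norm x" for i j
      using component_le_onorm[OF linear_endo_apply, of x i j] by (simp add: matrix_of_endo_def)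
    have "norm (matrix_of_endo x) \<le> (\<Sum>i\<in>UNIV. norm (matrix_of_endo x $ i))"
      by (simp add: norm_vec_def L2_set_le_sum)
    also have "\<dots> \<le> (\<Sum>i\<in>UNIV. \<Sum>j\<in>UNIV. \<bar>matrix_of_endo x $ i $ j\<bar>)"
      by (intro sum_mono norm_le_l1_cart)
    also have "\<dots> \<le> (\<Sum>i\<in>(UNIV::'n set). \<Sum>j\<in>(UNIV::'n set). norm x)"
      by (intro sum_mono entry)
    finally show ?thesis by (simp add: algebra_simps)
  qed
  then show ?thesis
    using linear_add[OF linear] linear_scale[OF linear] by (intro bounded_linear_intro) auto
qed

lemma matrix_of_endo_exp_term:
  "matrix_of_endo (endo_of_matrix A ^ i /\<^sub>R fact i) = mpow A i /\<^sub>R fact i"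
  by (metis linear_scale[OF bounded_linear.linear[OF bounded_linear_matrix_of_endo]]
      matrix_of_endo_of_matrix endo_of_matrix_mpow)

lemma summable_mexp: "summable (\<lambda>i. (1 / fact i) *\<^sub>R mpow (A::real^'n^'n) i)"
  using bounded_linear.summable[OF bounded_linear_matrix_of_endo summable_exp_generic[of "endo_of_matrix A"]]
  by (simp add: divide_inverse_commute matrix_of_endo_exp_term)

lemma mexp_eq_matrix_of_endo_exp: "mexp A = matrix_of_endo (exp (endo_of_matrix A))"
  using bounded_linear.suminf[OF bounded_linear_matrix_of_endo summable_exp_generic[of "endo_of_matrix A"]]
  by (simp add: mexp_def exp_def divide_inverse_commute matrix_of_endo_exp_term)

lemma endo_of_matrix_mexp: "endo_of_matrix (mexp A) = exp (endo_of_matrix A)"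
  by (simp add: mexp_eq_matrix_of_endo_exp)

lemma mexp_add_commuting:
  assumes "A ** B = B ** A" shows "mexp (A + B) = mexp A ** mexp B"
proof (rule endo_of_matrix_inject)
  have "endo_of_matrix A * endo_of_matrix B = endo_of_matrix B * endo_of_matrix A"
    using assms by (simp flip: endo_of_matrix_mult)
  then show "endo_of_matrix (mexp (A + B)) = endo_of_matrix (mexp A ** mexp B)"
    by (simp add: endo_of_matrix_mexp endo_of_matrix_mult endo_of_matrix_add exp_add_commuting)
qed

lemma mexp_zero: "mexp (0::real^'n^'n) = mat 1"
  by (intro endo_of_matrix_inject) (simp add: endo_of_matrix_mexp endo_of_matrix_zero endo_of_matrix_one)

lemma mexp_minus_inverse: "mexp (A::real^'n^'n) ** mexp (- A) = mat 1"
  using mexp_add_commuting[of A "- A"] by (simp add: mexp_zero)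

lemma mexp_scaleR_commute: "mexp (t *\<^sub>R (A::real^'n^'n)) ** A = A ** mexp (t *\<^sub>R A)"
  by (intro endo_of_matrix_inject)
    (simp add: endo_of_matrix_mult endo_of_matrix_mexp endo_of_matrix_scaleR exp_times_scaleR_commute)

lemma has_vector_derivative_mexp:
  "((\<lambda>s. mexp (s *\<^sub>R (A::real^'n^'n))) has_vector_derivative A ** mexp (t *\<^sub>R A)) (at t)"
proof -
  have "((\<lambda>s. matrix_of_endo (exp (s *\<^sub>R endo_of_matrix A))) has_vector_derivative
      matrix_of_endo (endo_of_matrix A * exp (t *\<^sub>R endo_of_matrix A))) (at t)"
    by (rule bounded_linear.has_vector_derivative[OF bounded_linear_matrix_of_endo
          exp_scaleR_has_vector_derivative_left])
  moreover have "matrix_of_endo (endo_of_matrix A * exp (t *\<^sub>R endo_of_matrix A)) = A ** mexp (t *\<^sub>R A)"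
    by (intro endo_of_matrix_inject) (simp add: endo_of_matrix_mult endo_of_matrix_mexp endo_of_matrix_scaleR)
  ultimately show ?thesis by (simp add: mexp_eq_matrix_of_endo_exp endo_of_matrix_scaleR)
qed

lemma mpow_commute: "mpow A i ** A = A ** mpow A i"
  by (induct i) (simp_all add: matrix_mul_assoc[symmetric])

lemma transpose_mpow: "transpose (mpow A i) = mpow (transpose A) i"
  by (induct i) (simp_all add: matrix_transpose_mul mpow_commute)

lemma transpose_mexp: "transpose (mexp A) = mexp (transpose A)"
  using bounded_linear.suminf[OF bounded_linear_transpose summable_mexp]
  by (simp add: mexp_def transpose_mpow)

lemma orthogonal_matrix_mexp: "transpose A = - A \<Longrightarrow> orthogonal_matrix (mexp (A::real^'n^'n))"
  by (simp add: orthogonal_matrix transpose_mexp mexp_minus_inverse[of "- A", simplified])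

section \<open>Parallel fields under a moving linear frame\<close>

lemma orth_eq_orthogonal_comp: "orth S = orthogonal_comp S"
  by (auto simp: orth_def orthogonal_comp_def orthogonal_def inner_commute)

lemma subspace_orth: "subspace (orth S)"
  by (simp add: orth_eq_orthogonal_comp subspace_orthogonal_comp)

lemma orth_orth: "subspace (S::'a::euclidean_space set) \<Longrightarrow> orth (orth S) = S"
  by (simp add: orth_eq_orthogonal_comp orthogonal_comp_self)

lemma in_orth_self_eq_0: "v \<in> S \<Longrightarrow> v \<in> orth S \<Longrightarrow> v = 0"
  by (auto simp: orth_def)

lemma has_vector_derivative_in_subspace:
  fixes Z :: "real \<Rightarrow> 'a::euclidean_space"
  assumes I: "open I" and S: "subspace S" and Z: "\<And>s. s \<in> I \<Longrightarrow> Z s \<in> S"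
    and t: "t \<in> I" and deriv: "(Z has_vector_derivative Z') (at t)"
  shows "Z' \<in> S"
proof -
  have "Z' \<bullet> w = 0" if w: "w \<in> orth S" for w
  proof -
    have "((\<lambda>s. w \<bullet> Z s) has_vector_derivative w \<bullet> Z') (at t)"
      by (rule bounded_linear.has_vector_derivative[OF bounded_linear_inner_right deriv])
    then have "((\<lambda>s. 0) has_vector_derivative w \<bullet> Z') (at t)"
      by (rule has_vector_derivative_transform_within_open[OF _ I t])
        (use w Z in \<open>auto simp: orth_def inner_commute\<close>)
    then have "w \<bullet> Z' = 0"
      using has_vector_derivative_const vector_derivative_unique_at by blast
    then show ?thesis by (simp add: inner_commute)
  qed
  then have "Z' \<in> orth (orth S)" by (simp add: orth_def)
  then show ?thesis using orth_orth[OF S] by simp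
qed

lemma parallel_in_subspace_iff_deriv_0:
  fixes Z :: "real \<Rightarrow> 'a::euclidean_space"
  assumes I: "open I" and S: "subspace S" and Z: "\<And>t. t \<in> I \<Longrightarrow> Z t \<in> S"
  shows "(\<exists>Z'. \<forall>t\<in>I. Z t \<in> S \<and> (Z has_vector_derivative Z' t) (at t within I) \<and> Z' t \<in> orth S)
    \<longleftrightarrow> (\<forall>t\<in>I. (Z has_vector_derivative 0) (at t))"
proof
  assume "\<exists>Z'. \<forall>t\<in>I. Z t \<in> S \<and> (Z has_vector_derivative Z' t) (at t within I) \<and> Z' t \<in> orth S"
  then obtain Z' where Z': "\<And>t. t \<in> I \<Longrightarrow> (Z has_vector_derivative Z' t) (at t within I) \<and> Z' t \<in> orth S"
    by blast
  have "(Z has_vector_derivative 0) (at t)" if t: "t \<in> I" for t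
  proof -
    have deriv: "(Z has_vector_derivative Z' t) (at t)" using Z'[OF t] at_within_open[OF t I] by simp
    have "Z' t \<in> S" by (rule has_vector_derivative_in_subspace[OF I S Z t deriv])
    then have "Z' t = 0" using Z'[OF t] in_orth_self_eq_0 by blast
    with deriv show ?thesis by simp
  qed
  then show "\<forall>t\<in>I. (Z has_vector_derivative 0) (at t)" by blast
next
  assume "\<forall>t\<in>I. (Z has_vector_derivative 0) (at t)"
  then show "\<exists>Z'. \<forall>t\<in>I. Z t \<in> S \<and> (Z has_vector_derivative Z' t) (at t within I) \<and> Z' t \<in> orth S"
    using Z has_vector_derivative_at_within subspace_0[OF subspace_orth]
    by (intro exI[of _ "\<lambda>_. 0"]) blast
qed

text \<open>The derivative of \<open>Y = F Z\<close> is \<open>F' Z + F Z'\<close> with \<open>F' Z\<close> orthogonal to \<open>W\<close> and \<open>F Z'\<close> in \<open>W\<close>,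
  so its tangential part vanishes iff \<open>Z' = 0\<close>. The left inverse \<open>G\<close> only serves to show that \<open>Z\<close>
  is differentiable wherever \<open>Y\<close> is.\<close>

lemma parallel_transport_iff:
  fixes F G F' :: "real \<Rightarrow> 'a::euclidean_space \<Rightarrow> 'a" and Y Z :: "real \<Rightarrow> 'a"
  assumes I: "open I" and S: "subspace S"
    and F_deriv: "\<And>z z' t. t \<in> I \<Longrightarrow> (z has_vector_derivative z') (at t) \<Longrightarrow>
              ((\<lambda>s. F s (z s)) has_vector_derivative F' t (z t) + F t z') (at t)"
    and G_deriv: "\<And>y y' t. t \<in> I \<Longrightarrow> (y has_vector_derivative y') (at t) \<Longrightarrow>
              \<exists>z'. ((\<lambda>s. G s (y s)) has_vector_derivative z') (at t)"
    and linear: "\<And>t. linear (F t)"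
    and G_F: "\<And>t z. t \<in> I \<Longrightarrow> z \<in> S \<Longrightarrow> G t (F t z) = z"
    and F_in: "\<And>t z. t \<in> I \<Longrightarrow> z \<in> S \<Longrightarrow> F t z \<in> W t"
    and F'_orth: "\<And>t z. t \<in> I \<Longrightarrow> z \<in> S \<Longrightarrow> F' t z \<in> orth (W t)"
    and Z: "\<And>t. t \<in> I \<Longrightarrow> Z t \<in> S"
    and Y: "\<And>t. t \<in> I \<Longrightarrow> Y t = F t (Z t)"
  shows "(\<exists>Y'. \<forall>t\<in>I. Y t \<in> W t \<and> (Y has_vector_derivative Y' t) (at t within I) \<and> Y' t \<in> orth (W t))
     \<longleftrightarrow> (\<exists>Z'. \<forall>t\<in>I. Z t \<in> S \<and> (Z has_vector_derivative Z' t) (at t within I) \<and> Z' t \<in> orth S)"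
    (is "?Y_parallel \<longleftrightarrow> ?Z_parallel")
proof -
  have Y_deriv: "(Y has_vector_derivative F' t (Z t) + F t z') (at t)"
    if "t \<in> I" "(Z has_vector_derivative z') (at t)" for t z'
    by (rule has_vector_derivative_transform_within_open[OF F_deriv[OF that] I \<open>t \<in> I\<close>])
      (simp add: Y)
  have "?Y_parallel \<longleftrightarrow> (\<forall>t\<in>I. (Z has_vector_derivative 0) (at t))"
  proof
    assume ?Y_parallel
    then obtain Y' where Y': "\<And>t. t \<in> I \<Longrightarrow>
        (Y has_vector_derivative Y' t) (at t within I) \<and> Y' t \<in> orth (W t)"
      by blast
    show "\<forall>t\<in>I. (Z has_vector_derivative 0) (at t)"
    proof
      fix t assume t: "t \<in> I"
      have Y'_at: "(Y has_vector_derivative Y' t) (at t)"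
        using Y'[OF t] at_within_open[OF t I] by simp
      obtain z' where z': "((\<lambda>s. G s (Y s)) has_vector_derivative z') (at t)"
        using G_deriv[OF t Y'_at] by blast
      have Z': "(Z has_vector_derivative z') (at t)"
        by (rule has_vector_derivative_transform_within_open[OF z' I t]) (simp add: Y G_F Z)
      have z'_S: "z' \<in> S" by (rule has_vector_derivative_in_subspace[OF I S Z t Z'])
      have "Y' t = F' t (Z t) + F t z'"
        using Y_deriv[OF t Z'] Y'_at vector_derivative_unique_at by blast
      then have "F t z' \<in> orth (W t)"
        using subspace_diff[OF subspace_orth conjunct2[OF Y'[OF t]] F'_orth[OF t Z[OF t]]] by simp
      then have F_z': "F t z' = 0" using F_in[OF t z'_S] in_orth_self_eq_0 by blast
      have "z' = G t (F t z')" using G_F[OF t z'_S] by simp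
      also have "\<dots> = G t (F t 0)" using F_z' linear_0[OF linear] by simp
      also have "\<dots> = 0" using G_F[OF t subspace_0[OF S]] .
      finally show "(Z has_vector_derivative 0) (at t)" using Z' by simp
    qed
  next
    assume Z_const: "\<forall>t\<in>I. (Z has_vector_derivative 0) (at t)"
    have "(Y has_vector_derivative F' t (Z t)) (at t within I)" if t: "t \<in> I" for t
    proof -
      have "(Y has_vector_derivative F' t (Z t) + F t 0) (at t)"
        using Y_deriv[OF t] Z_const t by blast
      then show ?thesis by (simp add: linear_0[OF linear] has_vector_derivative_at_within)
    qed
    then show ?Y_parallel
      by (intro exI[of _ "\<lambda>t. F' t (Z t)"] ballI conjI) (simp_all add: Y F_in F'_orth Z)
  qed
  then show ?thesis by (simp only: parallel_in_subspace_iff_deriv_0[OF I S Z])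
qed

section \<open>The Stiefel manifold at a point\<close>

lemma skew_iff: "A \<in> skew \<longleftrightarrow> transpose A = - A"
  by (simp add: skew_def)

lemma tanSt_iff: "V \<in> tanSt Y \<longleftrightarrow> transpose Y ** V + transpose V ** Y = 0"
  by (simp add: tanSt_def)

lemma subspace_tanSt: "subspace (tanSt Y)"
  unfolding subspace_def tanSt_def
  by (auto simp: matrix_distrib algebra_simps simp flip: scaleR_add_right)

lemma tanSt_transpose_mult: "V \<in> tanSt Y \<Longrightarrow> transpose V ** Y = - (transpose Y ** V)"
  by (simp add: tanSt_iff eq_neg_iff_add_eq_0 add.commute)

lemma linear_f_op: "linear (f_op \<xi>)"
  by (rule linearI) (simp_all add: f_op_def matrix_distrib algebra_simps)

lemma linear_PperpX: "linear (PperpX X)"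
  by (rule linearI) (simp_all add: PperpX_def matrix_distrib algebra_simps)

lemma linear_pr_p: "linear (pr_p X)"
  by (rule linearI) (simp_all add: pr_p_def Let_def matrix_distrib algebra_simps)

lemma linear_ad: "linear (ad \<xi>)"
  by (rule linearI) (simp_all add: ad_def matrix_distrib algebra_simps)

lemma f_op_skew_adjoint:
  assumes "transpose \<Omega> = - \<Omega>" "transpose \<eta> = - \<eta>"
  shows "f_op (\<Omega>, \<eta>) W \<bullet> W' + W \<bullet> f_op (\<Omega>, \<eta>) W' = 0"
proof -
  have "(\<Omega> ** W) \<bullet> W' = - (W \<bullet> (\<Omega> ** W'))"
    using assms by (simp add: inner_matrix_mult_left)
  moreover have "(W ** \<eta>) \<bullet> W' = - (W \<bullet> (W' ** \<eta>))"
    using assms by (simp only: inner_matrix_mult_right matrix_neg_right inner_minus_right)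
  ultimately show ?thesis by (simp add: f_op_def inner_diff_left inner_diff_right)
qed

lemma bounded_bilinear_g_inner: "bounded_bilinear g_inner"
proof -
  have "bilinear g_inner"
    unfolding bilinear_def g_inner_def
    by (auto intro!: linearI simp: matrix_distrib trace_add trace_scaleR algebra_simps)
  then show ?thesis using bilinear_conv_bounded_bilinear by blast
qed

lemma g_inner_commute: "g_inner a b = g_inner b a"
  unfolding g_inner_def by (simp only: trace_mul_sym[of "fst a"] trace_mul_sym[of "snd a"])

lemma g_inner_skew:
  "fst w \<in> skew \<Longrightarrow> snd w \<in> skew \<Longrightarrow> g_inner w w' = fst w \<bullet> fst w' - 2 * (snd w \<bullet> snd w')"
  by (simp add: g_inner_def skew_iff trace_skew_mult)

lemma g_inner_ad_skew: "g_inner (ad \<xi> u) v + g_inner u (ad \<xi> v) = 0"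
  by (simp add: g_inner_def ad_def matrix_diff_rdistrib matrix_diff_ldistrib trace_sub
      matrix_mul_assoc trace_mult_cyclic[of "fst \<xi>"] trace_mult_cyclic[of "snd \<xi>"])

lemma subspace_pX: "subspace (pX (X::real^'k^'n))"
proof -
  have "pX X = {\<zeta>. fst \<zeta> \<in> skew} \<inter> {\<zeta>. snd \<zeta> \<in> skew} \<inter> (\<Inter>\<theta>\<in>hX X. {\<zeta>. g_inner \<zeta> \<theta> = 0})"
    by (auto simp: pX_def)
  moreover have "subspace (\<Inter>\<theta>\<in>hX X. {\<zeta>. g_inner \<zeta> \<theta> = 0})"
  proof (rule subspace_Inter, safe)
    fix \<theta>
    show "subspace {\<zeta>. g_inner \<zeta> \<theta> = 0}"
      by (simp add: subspace_def bounded_bilinear.add_left[OF bounded_bilinear_g_inner]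
          bounded_bilinear.scaleR_left[OF bounded_bilinear_g_inner]
          bounded_bilinear.zero_left[OF bounded_bilinear_g_inner] del: split_paired_All)
  qed
  moreover have "subspace {\<zeta>::(real^'n^'n) \<times> (real^'k^'k). fst \<zeta> \<in> skew}"
    "subspace {\<zeta>::(real^'n^'n) \<times> (real^'k^'k). snd \<zeta> \<in> skew}"
    by (auto simp: subspace_def skew_iff)
  ultimately show ?thesis by (simp add: subspace_inter)
qed

lemma pX_skew: "w \<in> pX X \<Longrightarrow> fst w \<in> skew \<and> snd w \<in> skew"
  by (simp add: pX_def)

lemma ad_skew:
  "fst a \<in> skew \<Longrightarrow> snd a \<in> skew \<Longrightarrow> fst u \<in> skew \<Longrightarrow> snd u \<in> skew \<Longrightarrow>
    fst (ad a u) \<in> skew \<and> snd (ad a u) \<in> skew"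
  by (simp add: skew_iff ad_def matrix_transpose_mul)

text \<open>\<open>tan_of_p X\<close> is the differential of \<open>\<iota>\<^sub>X \<circ> \<pi>\<close> at the identity restricted to \<open>\<pp>\<close>, and
  \<open>p_of_tan X\<close> its inverse.\<close>

definition tan_of_p :: "real^'k^'n \<Rightarrow> (real^'n^'n) \<times> (real^'k^'k) \<Rightarrow> real^'k^'n" where
  "tan_of_p X w = fst w ** X - X ** snd w"

definition p_of_tan :: "real^'k^'n \<Rightarrow> real^'k^'n \<Rightarrow> (real^'n^'n) \<times> (real^'k^'k)" where
  "p_of_tan X V = (V ** transpose X - X ** transpose V, transpose X ** V)"

lemma linear_tan_of_p: "linear (tan_of_p X)"
  by (rule linearI) (auto simp: tan_of_p_def matrix_distrib algebra_simps)

lemma linear_p_of_tan: "linear (p_of_tan X)"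
  by (rule linearI) (auto simp: p_of_tan_def matrix_distrib algebra_simps)

locale stiefel_point =
  fixes X :: "real^'k^'n"
  assumes stiefel: "transpose X ** X = mat 1"
begin

lemma in_Stiefel: "X \<in> Stiefel"
  using stiefel by (simp add: Stiefel_def)

abbreviation "PX \<equiv> X ** transpose X"

lemma PX_X [simp]: "PX ** X = X"
  by (metis stiefel matrix_mul_assoc matrix_mul_rid)
lemma transpose_X_PX [simp]: "transpose X ** PX = transpose X"
  by (metis stiefel matrix_mul_assoc matrix_mul_lid)
lemma transpose_PX [simp]: "transpose PX = PX"
  by (simp add: matrix_transpose_mul)
lemma stiefel_assoc [simp]: "transpose X ** (X ** A) = A"
  by (simp add: matrix_mul_assoc stiefel)

text \<open>Two elements of \<open>\<hh>\<close> test membership in \<open>\<pp>\<close>: \<open>(X D X\<^sup>T, D)\<close> for skew \<open>D\<close>, and \<open>(E, 0)\<close>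
  for skew \<open>E\<close> annihilating the columns of \<open>X\<close>.\<close>

lemma in_hX_XDXt: "transpose D = - D \<Longrightarrow> (X ** D ** transpose X, D) \<in> hX X"
  by (simp add: hX_def skew_iff matrix_transpose_mul matrix_mul_assoc[symmetric] stiefel)

lemma in_hX_complement:
  assumes skew: "transpose E = - E" and "PX ** E = 0"
  shows "(E, 0) \<in> hX X"
proof -
  have "transpose X ** E = 0"
    by (metis assms(2) matrix_mul_assoc transpose_X_PX matrix_mult_zero_right)
  then have "transpose (E ** X) = 0" by (simp add: matrix_transpose_mul skew)
  then have "E ** X = 0" by (metis transpose_transpose transpose_zero)
  then show ?thesis using skew by (simp add: hX_def skew_iff)
qed

lemma pX_XtOmegaX:
  assumes w: "w \<in> pX X" shows "transpose X ** fst w ** X = 2 *\<^sub>R snd w"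
proof -
  obtain \<Omega> \<eta> where w_eq: "w = (\<Omega>, \<eta>)" by (cases w)
  have skew: "\<Omega> \<in> skew" "\<eta> \<in> skew" using w w_eq by (auto simp: pX_def)
  define D where "D = transpose X ** \<Omega> ** X - 2 *\<^sub>R \<eta>"
  have "transpose D = - D"
    using skew by (simp add: D_def skew_iff matrix_transpose_mul matrix_mul_assoc)
  then have "0 = g_inner w (X ** D ** transpose X, D)"
    using w in_hX_XDXt by (auto simp: pX_def)
  also have "\<dots> = (transpose X ** \<Omega> ** X) \<bullet> D - (2 *\<^sub>R \<eta>) \<bullet> D"
    using skew w_eq by (simp add: g_inner_skew inner_mult_mult_transpose)
  also have "\<dots> = D \<bullet> D" by (simp add: D_def inner_diff_left)
  finally have "D = 0" by simp
  then show ?thesis by (simp add: D_def w_eq)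
qed

lemma pX_Omega_decomp:
  assumes w: "w \<in> pX X" shows "fst w = PX ** fst w + fst w ** PX - PX ** fst w ** PX"
proof -
  obtain \<Omega> \<eta> where w_eq: "w = (\<Omega>, \<eta>)" by (cases w)
  have skew: "\<Omega> \<in> skew" "\<eta> \<in> skew" using w w_eq by (auto simp: pX_def)
  define E where "E = \<Omega> - PX ** \<Omega> - \<Omega> ** PX + PX ** \<Omega> ** PX"
  have PE: "PX ** E = 0"
    by (simp add: E_def matrix_distrib matrix_mul_assoc)
  have EP: "E ** PX = 0"
    by (simp add: E_def matrix_distrib flip: matrix_mul_assoc)
  have "transpose E = - E"
    using skew by (simp add: E_def skew_iff matrix_transpose_mul matrix_mul_assoc)
  then have "0 = g_inner w (E, 0)"
    using w in_hX_complement[OF _ PE] by (auto simp: pX_def)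
  also have "\<dots> = \<Omega> \<bullet> E" using skew w_eq by (simp add: g_inner_skew)
  also have "\<dots> = E \<bullet> E"
  proof -
    have "(PX ** \<Omega>) \<bullet> E = 0"
      by (simp only: inner_matrix_mult_left transpose_PX PE inner_zero_right)
    moreover have "(\<Omega> ** PX) \<bullet> E = 0"
      by (simp only: inner_matrix_mult_right transpose_PX EP inner_zero_right)
    moreover have "(PX ** \<Omega> ** PX) \<bullet> E = 0"
      using inner_matrix_mult_right[of "PX ** \<Omega>" PX E] by (simp only: transpose_PX EP inner_zero_right)
    ultimately show ?thesis by (simp add: E_def inner_add_left inner_diff_left)
  qed
  finally have "E = 0" by simp
  then show ?thesis by (simp add: E_def w_eq algebra_simps)
qed

lemma pX_intro:
  assumes skew: "\<Omega> \<in> skew" "\<eta> \<in> skew"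
    and XtOmegaX: "transpose X ** \<Omega> ** X = 2 *\<^sub>R \<eta>"
    and decomp: "\<Omega> = PX ** \<Omega> + \<Omega> ** PX - PX ** \<Omega> ** PX"
  shows "(\<Omega>, \<eta>) \<in> pX X"
proof -
  have "g_inner (\<Omega>, \<eta>) (\<Omega>', \<eta>') = 0" if "(\<Omega>', \<eta>') \<in> hX X" for \<Omega>' \<eta>'
  proof -
    have skew': "transpose \<Omega>' = - \<Omega>'" "transpose \<eta>' = - \<eta>'" and h: "\<Omega>' ** X = X ** \<eta>'"
      using that by (auto simp: hX_def skew_iff)
    have "transpose X ** \<Omega>' = \<eta>' ** transpose X"
      using arg_cong[OF h, of transpose] skew' by (simp add: matrix_transpose_mul)
    then have P\<Omega>': "PX ** \<Omega>' = X ** \<eta>' ** transpose X"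
      by (simp flip: matrix_mul_assoc)
    have \<Omega>'P: "\<Omega>' ** PX = X ** \<eta>' ** transpose X"
      by (simp add: h matrix_mul_assoc)
    have "(PX ** \<Omega> ** PX) \<bullet> \<Omega>' = (PX ** \<Omega>) \<bullet> (X ** \<eta>' ** transpose X)"
      using inner_matrix_mult_right[of "PX ** \<Omega>" PX \<Omega>'] by (simp only: transpose_PX \<Omega>'P)
    also have "\<dots> = \<Omega> \<bullet> (PX ** (X ** \<eta>' ** transpose X))"
      using inner_matrix_mult_left[of PX \<Omega>] by (simp only: transpose_PX)
    also have "\<dots> = \<Omega> \<bullet> (X ** \<eta>' ** transpose X)"
      by (simp only: matrix_mul_assoc PX_X)
    finally have PP: "(PX ** \<Omega> ** PX) \<bullet> \<Omega>' = \<Omega> \<bullet> (X ** \<eta>' ** transpose X)" .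
    have "\<Omega> \<bullet> \<Omega>' = (PX ** \<Omega>) \<bullet> \<Omega>' + (\<Omega> ** PX) \<bullet> \<Omega>' - (PX ** \<Omega> ** PX) \<bullet> \<Omega>'"
      by (subst (1) decomp) (simp add: inner_add_left inner_diff_left)
    also have "\<dots> = \<Omega> \<bullet> (X ** \<eta>' ** transpose X)"
      using inner_matrix_mult_left[of PX \<Omega> \<Omega>'] inner_matrix_mult_right[of \<Omega> PX \<Omega>']
      by (simp only: transpose_PX P\<Omega>' \<Omega>'P PP add_diff_cancel)
    also have "\<dots> = 2 * (\<eta> \<bullet> \<eta>')" by (simp add: inner_mult_mult_transpose XtOmegaX)
    finally show ?thesis using skew by (simp add: g_inner_skew)
  qed
  then show ?thesis using skew by (auto simp: pX_def)
qed

lemma pX_iff: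
  "w \<in> pX X \<longleftrightarrow> fst w \<in> skew \<and> snd w \<in> skew \<and> transpose X ** fst w ** X = 2 *\<^sub>R snd w \<and>
     fst w = PX ** fst w + fst w ** PX - PX ** fst w ** PX"
proof
  assume "w \<in> pX X"
  then show "fst w \<in> skew \<and> snd w \<in> skew \<and> transpose X ** fst w ** X = 2 *\<^sub>R snd w \<and>
     fst w = PX ** fst w + fst w ** PX - PX ** fst w ** PX"
    using pX_skew pX_XtOmegaX pX_Omega_decomp by blast
qed (use pX_intro[of "fst w" "snd w"] in simp)

lemma tan_of_p_in_tanSt: "fst w \<in> skew \<Longrightarrow> snd w \<in> skew \<Longrightarrow> tan_of_p X w \<in> tanSt X"
  by (simp add: tanSt_iff tan_of_p_def skew_iff matrix_distrib matrix_transpose_mul stiefel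
      flip: matrix_mul_assoc)

lemma p_of_tan_tan_of_p:
  assumes w: "w \<in> pX X" shows "p_of_tan X (tan_of_p X w) = w"
proof -
  obtain \<Omega> \<eta> where w_eq: "w = (\<Omega>, \<eta>)" by (cases w)
  have skew: "transpose \<Omega> = - \<Omega>" "transpose \<eta> = - \<eta>"
    and XtOmegaX: "transpose X ** \<Omega> ** X = 2 *\<^sub>R \<eta>"
    and decomp: "\<Omega> = PX ** \<Omega> + \<Omega> ** PX - PX ** \<Omega> ** PX"
    using w w_eq by (auto simp: pX_iff skew_iff)
  have "PX ** \<Omega> ** PX = X ** (transpose X ** \<Omega> ** X) ** transpose X"
    by (simp only: matrix_mul_assoc)
  also have "\<dots> = 2 *\<^sub>R (X ** \<eta> ** transpose X)" by (simp add: XtOmegaX)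
  finally have "\<Omega> = PX ** \<Omega> + \<Omega> ** PX - 2 *\<^sub>R (X ** \<eta> ** transpose X)"
    using decomp by simp
  moreover have "(\<Omega> ** X - X ** \<eta>) ** transpose X - X ** transpose (\<Omega> ** X - X ** \<eta>)
      = PX ** \<Omega> + \<Omega> ** PX - 2 *\<^sub>R (X ** \<eta> ** transpose X)"
    using skew by (simp add: matrix_distrib matrix_transpose_mul matrix_mul_assoc algebra_simps scaleR_2)
  moreover have "transpose X ** (\<Omega> ** X - X ** \<eta>) = transpose X ** \<Omega> ** X - \<eta>"
    by (simp add: matrix_diff_ldistrib matrix_mul_assoc stiefel)
  then have "transpose X ** (\<Omega> ** X - X ** \<eta>) = \<eta>"
    using XtOmegaX by (simp add: scaleR_2)
  ultimately show ?thesis by (simp add: w_eq p_of_tan_def tan_of_p_def)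
qed

lemma p_of_tan_in_pX:
  assumes V: "V \<in> tanSt X" shows "p_of_tan X V \<in> pX X"
proof -
  have VtX: "transpose V ** X = - (transpose X ** V)" using tanSt_transpose_mult[OF V] .
  let ?\<Omega> = "V ** transpose X - X ** transpose V"
  have "?\<Omega> \<in> skew" "transpose X ** V \<in> skew"
    by (simp_all add: skew_iff matrix_transpose_mul VtX)
  moreover have "transpose X ** ?\<Omega> ** X = 2 *\<^sub>R (transpose X ** V)"
    by (simp add: matrix_distrib stiefel VtX scaleR_2 flip: matrix_mul_assoc)
  moreover have "?\<Omega> = PX ** ?\<Omega> + ?\<Omega> ** PX - PX ** ?\<Omega> ** PX"
    by (simp add: matrix_distrib matrix_mul_assoc stiefel) (simp add: VtX stiefel flip: matrix_mul_assoc)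
  ultimately show ?thesis by (simp add: pX_iff p_of_tan_def)
qed

lemma tan_of_p_p_of_tan: "V \<in> tanSt X \<Longrightarrow> tan_of_p X (p_of_tan X V) = V"
  by (simp add: tan_of_p_def p_of_tan_def matrix_diff_rdistrib stiefel tanSt_transpose_mult
      flip: matrix_mul_assoc)

text \<open>\<open>2 (V \<bullet> V')\<close> is the Euclidean metric \<^term>\<open>eucl_metric V V'\<close>, so \<open>p_of_tan X\<close> is an isometry
  onto \<open>\<pp>\<close>.\<close>

lemma g_inner_p_of_tan:
  assumes V: "V \<in> tanSt X" and V': "V' \<in> tanSt X"
  shows "g_inner (p_of_tan X V) (p_of_tan X V') = 2 * (V \<bullet> V')"
proof -
  have skew: "fst (p_of_tan X V) \<in> skew" "snd (p_of_tan X V) \<in> skew"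
    using pX_skew[OF p_of_tan_in_pX[OF V]] by auto
  have Xt: "(U ** transpose X) \<bullet> (U' ** transpose X) = U \<bullet> U'"
    "(X ** transpose U) \<bullet> (X ** transpose U') = U \<bullet> U'" for U U' :: "real^'k^'n"
    by (simp add: inner_matrix_mult_right stiefel flip: matrix_mul_assoc)
      (simp add: inner_matrix_mult_left inner_transpose flip: matrix_mul_assoc)
  have mixed: "(U ** transpose X) \<bullet> (X ** transpose U') = - ((transpose X ** U) \<bullet> (transpose X ** U'))"
    if "U' \<in> tanSt X" for U U'
  proof -
    have "(U ** transpose X) \<bullet> (X ** transpose U') = U \<bullet> (X ** (transpose U' ** X))"
      by (simp add: inner_matrix_mult_right matrix_mul_assoc)
    also have "\<dots> = - ((transpose X ** U) \<bullet> (transpose X ** U'))"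
      by (simp add: tanSt_transpose_mult[OF that] inner_commute[of U] inner_matrix_mult_left)
    finally show ?thesis .
  qed
  show ?thesis
    using skew mixed[OF V'] mixed[OF V, of V']
    by (simp add: g_inner_skew p_of_tan_def inner_diff_left inner_diff_right Xt inner_commute
        algebra_simps)
qed

lemma g_inner_eq_inner_tan_of_p:
  assumes u: "u \<in> pX X" and v: "v \<in> pX X"
  shows "g_inner u v = 2 * (tan_of_p X u \<bullet> tan_of_p X v)"
proof -
  have "g_inner (p_of_tan X (tan_of_p X u)) (p_of_tan X (tan_of_p X v))
      = 2 * (tan_of_p X u \<bullet> tan_of_p X v)"
    using pX_skew[OF u] pX_skew[OF v] by (intro g_inner_p_of_tan tan_of_p_in_tanSt) auto
  then show ?thesis by (simp add: p_of_tan_tan_of_p[OF u] p_of_tan_tan_of_p[OF v])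
qed

lemma pr_p_in_pX: "fst u \<in> skew \<Longrightarrow> snd u \<in> skew \<Longrightarrow> pr_p X u \<in> pX X"
  unfolding pX_iff skew_iff
  by (simp add: pr_p_def Let_def matrix_transpose_mul matrix_distrib stiefel algebra_simps vec_times_2
      flip: matrix_mul_assoc)

lemma diff_pr_p_in_hX:
  assumes "fst u \<in> skew" "snd u \<in> skew" shows "u - pr_p X u \<in> hX X"
proof -
  obtain \<Omega> \<eta> where u: "u = (\<Omega>, \<eta>)" by (cases u)
  have "transpose \<Omega> = - \<Omega>" "transpose \<eta> = - \<eta>" using assms u by (auto simp: skew_iff)
  then show ?thesis unfolding u hX_def skew_iff
    by (simp add: pr_p_def Let_def matrix_transpose_mul matrix_distrib stiefel algebra_simps
        vec_times_2 flip: matrix_mul_assoc)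
qed

lemma g_inner_pr_p:
  assumes "fst w \<in> skew" "snd w \<in> skew" and v: "v \<in> pX X"
  shows "g_inner (pr_p X w) v = g_inner w v"
proof -
  have "g_inner v (w - pr_p X w) = 0"
    using v diff_pr_p_in_hX[OF assms(1,2)] by (auto simp: pX_def)
  then show ?thesis
    by (simp add: g_inner_commute[of v] bounded_bilinear.diff_left[OF bounded_bilinear_g_inner])
qed

lemma tan_of_p_pr_p: "tan_of_p X (pr_p X u) = tan_of_p X u"
  by (simp add: tan_of_p_def pr_p_def Let_def matrix_distrib stiefel vec_times_2
      flip: matrix_mul_assoc)

lemma symmetric_mult_in_orth_tanSt:
  assumes S: "transpose S = S" shows "X ** S \<in> orth (tanSt X)"
proof -
  have "(X ** S) \<bullet> V = 0" if V: "V \<in> tanSt X" for V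
  proof -
    have "transpose (transpose X ** V) = - (transpose X ** V)"
      using tanSt_transpose_mult[OF V] by (simp add: matrix_transpose_mul)
    then have "(transpose X ** V) \<bullet> S = 0" by (rule inner_skew_symmetric_eq_0[OF _ S])
    then show ?thesis by (simp only: inner_matrix_mult_left inner_commute[of S])
  qed
  then show ?thesis by (simp add: orth_def)
qed

lemma PperpX_in_orth_tanSt: "PperpX X V \<in> orth (tanSt X)"
proof -
  have "PperpX X V = X ** ((1/2) *\<^sub>R (transpose X ** V + transpose V ** X))"
    by (simp add: PperpX_def)
  also have "\<dots> \<in> orth (tanSt X)"
    by (rule symmetric_mult_in_orth_tanSt) (simp add: matrix_transpose_mul add.commute)
  finally show ?thesis .
qed

lemma diff_PperpX_in_tanSt: "V - PperpX X V \<in> tanSt X"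
proof -
  have "transpose X ** PperpX X V = (1/2) *\<^sub>R (transpose X ** V + transpose V ** X)"
    "transpose (PperpX X V) ** X = (1/2) *\<^sub>R (transpose X ** V + transpose V ** X)"
    by (simp_all add: PperpX_def matrix_transpose_mul matrix_add_rdistrib stiefel
        flip: matrix_mul_assoc)
  then show ?thesis by (simp add: tanSt_iff matrix_distrib algebra_simps)
qed

lemma PperpX_orth_tanSt:
  assumes "W \<in> orth (tanSt X)" shows "PperpX X W = W"
proof -
  have "W - PperpX X W \<in> orth (tanSt X)"
    by (rule subspace_diff[OF subspace_orth assms PperpX_in_orth_tanSt])
  then have "W - PperpX X W = 0" using diff_PperpX_in_tanSt in_orth_self_eq_0 by blast
  then show ?thesis by simp
qed

lemma PperpX_self_adjoint: "PperpX X U \<bullet> V = U \<bullet> PperpX X V"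
proof -
  have expand: "PperpX X U \<bullet> V = (1/2) * ((transpose X ** U) \<bullet> (transpose X ** V)
      + (transpose U ** X) \<bullet> (transpose X ** V))" for U V :: "real^'k^'n"
    by (simp add: PperpX_def inner_matrix_mult_left inner_add_left)
  have "(transpose U ** X) \<bullet> (transpose X ** V) = (transpose X ** U) \<bullet> (transpose V ** X)"
    by (simp only: inner_transpose[symmetric, of "transpose U ** X"] matrix_transpose_mul
        transpose_transpose)
  then show ?thesis
    using expand[of U V] expand[of V U] by (simp add: inner_commute)
qed

text \<open>For \<open>(\<Omega>, \<eta>) \<in> \<pp>\<close> write \<open>\<Omega> X = 2 X \<eta> + N\<close>; the columns of \<open>N\<close> are orthogonal to those of \<open>X\<close>,
  and \<open>\<Omega>\<close> maps any such matrix back into the column space of \<open>X\<close>.\<close>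

lemma pX_normal_part_orth:
  "w \<in> pX X \<Longrightarrow> transpose X ** (fst w ** X - 2 *\<^sub>R (X ** snd w)) = 0"
  by (simp add: matrix_diff_ldistrib pX_XtOmegaX matrix_mul_assoc stiefel)

lemma pX_mult_orth:
  assumes w: "(\<Omega>, \<eta>) \<in> pX X" and XtD: "transpose X ** D = 0"
  shows "\<Omega> ** D = - (X ** (transpose (\<Omega> ** X - 2 *\<^sub>R (X ** \<eta>)) ** D))"
proof -
  have skew: "transpose \<Omega> = - \<Omega>" "transpose \<eta> = - \<eta>"
    using pX_skew[OF w] by (simp_all add: skew_iff)
  have "\<Omega> ** D = (PX ** \<Omega> + \<Omega> ** PX - PX ** \<Omega> ** PX) ** D"
    using pX_Omega_decomp[OF w] by simp
  also have "\<dots> = PX ** \<Omega> ** D"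
    by (simp add: matrix_add_rdistrib matrix_diff_rdistrib XtD flip: matrix_mul_assoc)
  also have "\<dots> = X ** (transpose X ** \<Omega> ** D)" by (simp add: matrix_mul_assoc)
  also have "transpose X ** \<Omega> = 2 *\<^sub>R (\<eta> ** transpose X) - transpose (\<Omega> ** X - 2 *\<^sub>R (X ** \<eta>))"
    using skew by (simp add: matrix_transpose_mul)
  finally show ?thesis
    by (simp add: matrix_diff_rdistrib matrix_diff_ldistrib XtD flip: matrix_mul_assoc)
qed

text \<open>The tangential part of \<open>f\<^sub>\<xi> (\<Omega> X - X \<eta>)\<close> is half of that of \<open>[\<xi>, (\<Omega>, \<eta>)] X\<close>: after
  splitting off the normal parts \<open>B\<close> of \<open>\<xi>\<^sub>1 X\<close> and \<open>D\<close> of \<open>\<Omega> X\<close>, the difference is \<open>X\<close> times a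
  symmetric matrix.\<close>

lemma f_op_tan_of_p_ad_in_orth_tanSt:
  assumes xi: "(\<xi>1, \<xi>2) \<in> pX X" and w: "(\<Omega>, \<eta>) \<in> pX X"
  shows "2 *\<^sub>R f_op (\<xi>1, \<xi>2) (tan_of_p X (\<Omega>, \<eta>)) - tan_of_p X (ad (\<xi>1, \<xi>2) (\<Omega>, \<eta>))
    \<in> orth (tanSt X)"
proof -
  have skew: "transpose \<xi>1 = - \<xi>1" "transpose \<xi>2 = - \<xi>2" "transpose \<Omega> = - \<Omega>" "transpose \<eta> = - \<eta>"
    using pX_skew[OF xi] pX_skew[OF w] by (simp_all add: skew_iff)
  define B where "B = \<xi>1 ** X - 2 *\<^sub>R (X ** \<xi>2)"
  define D where "D = \<Omega> ** X - 2 *\<^sub>R (X ** \<eta>)"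
  have \<xi>1X: "\<xi>1 ** X = 2 *\<^sub>R (X ** \<xi>2) + B" and \<Omega>X: "\<Omega> ** X = 2 *\<^sub>R (X ** \<eta>) + D"
    by (simp_all add: B_def D_def)
  have \<xi>1D: "\<xi>1 ** D = - (X ** (transpose B ** D))"
    using pX_mult_orth[OF xi] pX_normal_part_orth[OF w] by (simp add: B_def D_def)
  have \<Omega>B: "\<Omega> ** B = - (X ** (transpose D ** B))"
    using pX_mult_orth[OF w] pX_normal_part_orth[OF xi] by (simp add: B_def D_def)
  have "tan_of_p X (\<Omega>, \<eta>) = X ** \<eta> + D"
    by (simp add: tan_of_p_def \<Omega>X vec_times_2 algebra_simps)
  then have "f_op (\<xi>1, \<xi>2) (tan_of_p X (\<Omega>, \<eta>)) = (\<xi>1 ** X) ** \<eta> + \<xi>1 ** D - X ** \<eta> ** \<xi>2 - D ** \<xi>2"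
    by (simp add: f_op_def matrix_distrib matrix_mul_assoc)
  also have "\<dots> = 2 *\<^sub>R (X ** \<xi>2 ** \<eta>) + B ** \<eta> - X ** (transpose B ** D) - X ** \<eta> ** \<xi>2 - D ** \<xi>2"
    by (simp add: \<xi>1X \<xi>1D matrix_add_rdistrib)
  finally have f: "f_op (\<xi>1, \<xi>2) (tan_of_p X (\<Omega>, \<eta>)) =
      2 *\<^sub>R (X ** \<xi>2 ** \<eta>) + B ** \<eta> - X ** (transpose B ** D) - X ** \<eta> ** \<xi>2 - D ** \<xi>2" .
  have "tan_of_p X (ad (\<xi>1, \<xi>2) (\<Omega>, \<eta>))
      = \<xi>1 ** (\<Omega> ** X) - \<Omega> ** (\<xi>1 ** X) - X ** \<xi>2 ** \<eta> + X ** \<eta> ** \<xi>2"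
    by (simp add: tan_of_p_def ad_def matrix_distrib matrix_mul_assoc)
  also have "\<dots> = 2 *\<^sub>R ((\<xi>1 ** X) ** \<eta>) + \<xi>1 ** D - 2 *\<^sub>R ((\<Omega> ** X) ** \<xi>2) - \<Omega> ** B
       - X ** \<xi>2 ** \<eta> + X ** \<eta> ** \<xi>2"
    by (simp add: \<Omega>X \<xi>1X matrix_add_ldistrib matrix_mul_assoc)
  also have "\<dots> = 4 *\<^sub>R (X ** \<xi>2 ** \<eta>) + 2 *\<^sub>R (B ** \<eta>) - X ** (transpose B ** D)
       - 4 *\<^sub>R (X ** \<eta> ** \<xi>2) - 2 *\<^sub>R (D ** \<xi>2) + X ** (transpose D ** B)
       - X ** \<xi>2 ** \<eta> + X ** \<eta> ** \<xi>2"
    by (simp add: \<xi>1X \<Omega>X \<xi>1D \<Omega>B matrix_add_rdistrib algebra_simps vec_times_2)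
  finally have ad: "tan_of_p X (ad (\<xi>1, \<xi>2) (\<Omega>, \<eta>)) = 4 *\<^sub>R (X ** \<xi>2 ** \<eta>) + 2 *\<^sub>R (B ** \<eta>)
       - X ** (transpose B ** D) - 4 *\<^sub>R (X ** \<eta> ** \<xi>2) - 2 *\<^sub>R (D ** \<xi>2) + X ** (transpose D ** B)
       - X ** \<xi>2 ** \<eta> + X ** \<eta> ** \<xi>2" .
  have "2 *\<^sub>R f_op (\<xi>1, \<xi>2) (tan_of_p X (\<Omega>, \<eta>)) - tan_of_p X (ad (\<xi>1, \<xi>2) (\<Omega>, \<eta>))
      = X ** (\<xi>2 ** \<eta> + \<eta> ** \<xi>2 - transpose B ** D - transpose D ** B)"
    unfolding f ad by (simp add: matrix_distrib matrix_mul_assoc vec_eq_iff algebra_simps)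
  also have "\<dots> \<in> orth (tanSt X)"
    by (rule symmetric_mult_in_orth_tanSt) (simp add: matrix_transpose_mul skew algebra_simps)
  finally show ?thesis .
qed

text \<open>The acceleration of \<open>t \<mapsto> e\<^sup>t\<^sup>\<xi>\<^sup>1 X e\<^sup>-\<^sup>t\<^sup>\<xi>\<^sup>2\<close> at \<open>t = 0\<close> is normal.\<close>

lemma f_op_f_op_in_orth_tanSt:
  assumes xi: "(\<xi>1, \<xi>2) \<in> pX X"
  shows "f_op (\<xi>1, \<xi>2) (f_op (\<xi>1, \<xi>2) X) \<in> orth (tanSt X)"
proof -
  have skew: "transpose \<xi>1 = - \<xi>1" "transpose \<xi>2 = - \<xi>2"
    using pX_skew[OF xi] by (simp_all add: skew_iff)
  define B where "B = \<xi>1 ** X - 2 *\<^sub>R (X ** \<xi>2)"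
  have \<xi>1X: "\<xi>1 ** X = 2 *\<^sub>R (X ** \<xi>2) + B" by (simp add: B_def)
  have \<xi>1B: "\<xi>1 ** B = - (X ** (transpose B ** B))"
    using pX_mult_orth[OF xi] pX_normal_part_orth[OF xi] by (simp add: B_def)
  have "f_op (\<xi>1, \<xi>2) X = X ** \<xi>2 + B"
    by (simp add: f_op_def \<xi>1X vec_times_2 algebra_simps)
  then have "f_op (\<xi>1, \<xi>2) (f_op (\<xi>1, \<xi>2) X) = (\<xi>1 ** X) ** \<xi>2 + \<xi>1 ** B - X ** \<xi>2 ** \<xi>2 - B ** \<xi>2"
    by (simp add: f_op_def matrix_distrib matrix_mul_assoc)
  also have "\<dots> = X ** (\<xi>2 ** \<xi>2 - transpose B ** B)"
    by (simp add: \<xi>1X \<xi>1B matrix_distrib matrix_mul_assoc algebra_simps vec_times_2)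
  also have "\<dots> \<in> orth (tanSt X)"
    by (rule symmetric_mult_in_orth_tanSt) (simp add: matrix_transpose_mul skew)
  finally show ?thesis .
qed

end

section \<open>The action of \<open>O(n) \<times> O(k)\<close>\<close>

lemma linear_Phi: "linear (Phi g)"
  by (rule linearI) (simp_all add: Phi_def matrix_distrib)

lemma Phi_inner:
  assumes a: "orthogonal_matrix a" and b: "orthogonal_matrix b"
  shows "Phi (a, b) U \<bullet> Phi (a, b) V = U \<bullet> V"
proof -
  have "Phi (a, b) U \<bullet> Phi (a, b) V = (a ** U) \<bullet> (a ** V ** (transpose b ** b))"
    by (simp add: Phi_def inner_matrix_mult_right matrix_mul_assoc)
  also have "\<dots> = U \<bullet> V"
    using a b by (simp add: orthogonal_matrix_def inner_matrix_mult_left matrix_mul_assoc)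
  finally show ?thesis .
qed

lemma Phi_transpose_Phi:
  assumes "orthogonal_matrix a" "orthogonal_matrix b"
  shows "Phi (transpose a, transpose b) (Phi (a, b) V) = V"
    "Phi (a, b) (Phi (transpose a, transpose b) V) = V"
  using assms by (simp_all add: Phi_def orthogonal_matrix_def matrix_mul_assoc)
    (simp_all flip: matrix_mul_assoc)

lemma Phi_in_Stiefel:
  "orthogonal_matrix a \<Longrightarrow> orthogonal_matrix b \<Longrightarrow> Y \<in> Stiefel \<Longrightarrow> Phi (a, b) Y \<in> Stiefel"
  by (simp add: Stiefel_def Phi_def orthogonal_matrix_def matrix_transpose_mul matrix_mul_assoc)
    (simp flip: matrix_mul_assoc)

lemma Phi_in_tanSt:
  assumes a: "orthogonal_matrix a" and V: "V \<in> tanSt Y"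
  shows "Phi (a, b) V \<in> tanSt (Phi (a, b) Y)"
proof -
  have "transpose (Phi (a, b) Y) ** Phi (a, b) V + transpose (Phi (a, b) V) ** Phi (a, b) Y
      = b ** (transpose Y ** V + transpose V ** Y) ** transpose b"
    using a by (simp add: Phi_def orthogonal_matrix_def matrix_transpose_mul matrix_distrib
        matrix_mul_assoc) (simp flip: matrix_mul_assoc)
  then show ?thesis using V by (simp add: tanSt_iff)
qed

lemma Phi_in_orth_tanSt:
  assumes a: "orthogonal_matrix a" and b: "orthogonal_matrix b" and V: "V \<in> orth (tanSt Y)"
  shows "Phi (a, b) V \<in> orth (tanSt (Phi (a, b) Y))"
proof -
  have "Phi (a, b) V \<bullet> W = 0" if W: "W \<in> tanSt (Phi (a, b) Y)" for W
  proof -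
    have "Phi (transpose a, transpose b) W \<in> tanSt Y"
      using Phi_in_tanSt[of "transpose a" W _ "transpose b", OF _ W] a b
      by (simp add: Phi_transpose_Phi)
    then have "V \<bullet> Phi (transpose a, transpose b) W = 0" using V by (simp add: orth_def)
    moreover have "Phi (a, b) V \<bullet> W = V \<bullet> Phi (transpose a, transpose b) W"
      using Phi_inner[OF a b, of V "Phi (transpose a, transpose b) W"]
      by (simp only: Phi_transpose_Phi[OF a b])
    ultimately show ?thesis by simp
  qed
  then show ?thesis by (simp add: orth_def)
qed

lemma has_vector_derivative_Phi_mexp:
  fixes \<xi>1 :: "real^'n^'n" and \<xi>2 :: "real^'k^'k" and U :: "real \<Rightarrow> real^'k^'n"
  assumes skew: "transpose \<xi>2 = - \<xi>2" and U: "(U has_vector_derivative U') (at t)"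
  shows "((\<lambda>s. Phi (mexp (s *\<^sub>R \<xi>1), mexp (s *\<^sub>R \<xi>2)) (U s)) has_vector_derivative
           Phi (mexp (t *\<^sub>R \<xi>1), mexp (t *\<^sub>R \<xi>2)) (f_op (\<xi>1, \<xi>2) (U t) + U')) (at t)"
proof -
  let ?a = "mexp (t *\<^sub>R \<xi>1)" and ?b = "mexp (t *\<^sub>R \<xi>2)"
  have "((\<lambda>s. transpose (mexp (s *\<^sub>R \<xi>2))) has_vector_derivative transpose (\<xi>2 ** ?b)) (at t)"
    by (rule bounded_linear.has_vector_derivative[OF bounded_linear_transpose has_vector_derivative_mexp])
  from has_vector_derivative_matrix_mult[OF
      has_vector_derivative_matrix_mult[OF has_vector_derivative_mexp U] this]
  have "((\<lambda>s. Phi (mexp (s *\<^sub>R \<xi>1), mexp (s *\<^sub>R \<xi>2)) (U s)) has_vector_derivative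
      ?a ** U t ** transpose (\<xi>2 ** ?b) + (?a ** U' + \<xi>1 ** ?a ** U t) ** transpose ?b) (at t)"
    by (simp add: Phi_def)
  moreover have "\<xi>1 ** (?a ** Z) = ?a ** (\<xi>1 ** Z)" for Z :: "real^'k^'n"
    by (simp add: matrix_mul_assoc mexp_scaleR_commute)
  moreover have "transpose ?b ** \<xi>2 = \<xi>2 ** transpose ?b"
    using arg_cong[OF mexp_scaleR_commute[of t \<xi>2], of transpose] skew
    by (simp add: matrix_transpose_mul)
  ultimately show ?thesis
    using skew by (simp add: Phi_def f_op_def matrix_transpose_mul matrix_distrib algebra_simps
        flip: matrix_mul_assoc)
qed

lemma frechet_derivative_iota_pi:
  fixes X :: "real^'k^'n" and g :: "(real^'n^'n) \<times> (real^'k^'k)"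
  shows "frechet_derivative (iota_pi X) (at g) =
     (\<lambda>h. fst g ** X ** transpose (snd h) + fst h ** X ** transpose (snd g))"
proof -
  have "bounded_linear (\<lambda>g::(real^'n^'n) \<times> (real^'k^'k). fst g ** X)"
    by (rule bounded_linear_compose[OF bounded_bilinear.bounded_linear_left[OF
            bounded_bilinear_matrix_mult] bounded_linear_fst])
  moreover have "bounded_linear (\<lambda>g::(real^'n^'n) \<times> (real^'k^'k). transpose (snd g))"
    by (rule bounded_linear_compose[OF bounded_linear_transpose bounded_linear_snd])
  from bounded_bilinear.FDERIV[OF bounded_bilinear_matrix_mult
      bounded_linear_imp_has_derivative[OF calculation] bounded_linear_imp_has_derivative[OF this]]
  show ?thesis by (intro frechet_derivative_at[symmetric]) (simp add: iota_pi_def[abs_def])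
qed

lemma frechet_derivative_gmul: "frechet_derivative (gmul a) (at x) = gmul a"
proof -
  have "linear (gmul a)" by (rule linearI) (simp_all add: gmul_def matrix_add_ldistrib)
  then show ?thesis
    by (intro frechet_derivative_at[symmetric] bounded_linear_imp_has_derivative)
      (simp add: linear_conv_bounded_linear)
qed

section \<open>Rolling along a one-parameter subgroup\<close>

lemma eucl_metric_eq_inner: "eucl_metric V W = 2 * (V \<bullet> W)"
  by (simp add: eucl_metric_def trace_transpose_mult)

lemma lin_isom_onI:
  assumes S: "subspace S" and F: "linear F" and A: "\<And>u. u \<in> S \<Longrightarrow> A u = F u"
    and into: "\<And>u. u \<in> S \<Longrightarrow> F u \<in> S'" and onto: "\<And>w. w \<in> S' \<Longrightarrow> \<exists>u\<in>S. F u = w"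
    and inner: "\<And>u v. u \<in> S \<Longrightarrow> v \<in> S \<Longrightarrow> F u \<bullet> F v = u \<bullet> v"
  shows "lin_isom_on A S S'"
proof -
  have "A ` S = S'"
    using into onto A by (auto simp: image_iff)
  then show ?thesis
    using subspace_add[OF S] subspace_mul[OF S] A inner
    by (simp add: lin_isom_on_def eucl_metric_eq_inner linear_add[OF F] linear_scale[OF F])
qed

locale stiefel_rolling = stiefel_point X for X :: "real^'k^'n" +
  fixes \<xi>1 :: "real^'n^'n" and \<xi>2 :: "real^'k^'k"
  assumes xi_in_pX: "(\<xi>1, \<xi>2) \<in> pX X"
begin

abbreviation g :: "real \<Rightarrow> (real^'n^'n) \<times> (real^'k^'k)" where
  "g t \<equiv> (mexp (t *\<^sub>R \<xi>1), mexp (t *\<^sub>R \<xi>2))"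

abbreviation g_inv :: "real \<Rightarrow> (real^'n^'n) \<times> (real^'k^'k)" where
  "g_inv t \<equiv> (transpose (mexp (t *\<^sub>R \<xi>1)), transpose (mexp (t *\<^sub>R \<xi>2)))"

lemma xi_skew: "transpose \<xi>1 = - \<xi>1" "transpose \<xi>2 = - \<xi>2"
  using pX_skew[OF xi_in_pX] by (simp_all add: skew_iff)

lemma orthogonal_g: "orthogonal_matrix (mexp (t *\<^sub>R \<xi>1))" "orthogonal_matrix (mexp (t *\<^sub>R \<xi>2))"
  by (simp_all add: orthogonal_matrix_mexp xi_skew)

lemmas Phi_g_inv_g = Phi_transpose_Phi[OF orthogonal_g]

text \<open>Both rolling maps of the statement have the form \<open>V \<mapsto> \<Phi>\<^bsub>g t\<^esub> (E (e\<^sup>t\<^sup>x (P V)))\<close>: \<open>B(t)\<close> with the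
  charts \<open>E = tan_of_p X\<close>, \<open>P = p_of_tan X\<close> identifying \<open>\<pp>\<close> with \<open>T\<^sub>XSt(n,k)\<close>, and \<open>C(t)\<close> with
  \<open>E = P = id\<close>.\<close>

definition moving_frame ::
  "'b::euclidean_space endo \<Rightarrow> ('b \<Rightarrow> real^'k^'n) \<Rightarrow> (real^'k^'n \<Rightarrow> 'b) \<Rightarrow> real \<Rightarrow>
    real^'k^'n \<Rightarrow> real^'k^'n" where
  "moving_frame x E P t V = Phi (g t) (E (endo_apply (exp (t *\<^sub>R x)) (P V)))"

definition moving_frame_inv ::
  "'b::euclidean_space endo \<Rightarrow> ('b \<Rightarrow> real^'k^'n) \<Rightarrow> (real^'k^'n \<Rightarrow> 'b) \<Rightarrow> real \<Rightarrow>
    real^'k^'n \<Rightarrow> real^'k^'n" where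
  "moving_frame_inv x E P t W = E (endo_apply (exp (- (t *\<^sub>R x))) (P (Phi (g_inv t) W)))"

definition moving_frame_drift ::
  "'b::euclidean_space endo \<Rightarrow> ('b \<Rightarrow> real^'k^'n) \<Rightarrow> (real^'k^'n \<Rightarrow> 'b) \<Rightarrow> real \<Rightarrow>
    real^'k^'n \<Rightarrow> real^'k^'n" where
  "moving_frame_drift x E P t V =
    (let w = endo_apply (exp (t *\<^sub>R x)) (P V) in Phi (g t) (f_op (\<xi>1, \<xi>2) (E w) + E (endo_apply x w)))"

lemma linear_moving_frame: "linear E \<Longrightarrow> linear P \<Longrightarrow> linear (moving_frame x E P t)"
proof -
  assume "linear E" "linear P"
  moreover have "moving_frame x E P t = Phi (g t) \<circ> E \<circ> endo_apply (exp (t *\<^sub>R x)) \<circ> P"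
    by (simp add: moving_frame_def fun_eq_iff)
  ultimately show ?thesis by (simp add: linear_compose linear_Phi linear_endo_apply)
qed

lemma has_vector_derivative_moving_frame:
  assumes E: "linear E" and P: "linear P" and z: "(z has_vector_derivative z') (at t)"
  shows "((\<lambda>s. moving_frame x E P s (z s)) has_vector_derivative
     moving_frame_drift x E P t (z t) + moving_frame x E P t z') (at t)"
proof -
  have E': "bounded_linear E" and P': "bounded_linear P"
    using E P by (simp_all add: linear_conv_bounded_linear)
  note deriv = bounded_linear.has_vector_derivative[OF E'
      has_vector_derivative_endo_exp_apply[OF bounded_linear.has_vector_derivative[OF P' z]]]
  show ?thesis
    unfolding moving_frame_def
    by (rule has_vector_derivative_eq_rhs[OF has_vector_derivative_Phi_mexp[OF xi_skew(2) deriv]])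
      (simp add: moving_frame_drift_def moving_frame_def Let_def linear_add[OF E]
        linear_add[OF linear_Phi] algebra_simps)
qed

lemma moving_frame_inv_differentiable:
  assumes E: "linear E" and P: "linear P" and y: "(y has_vector_derivative y') (at t)"
  shows "\<exists>z'. ((\<lambda>s. moving_frame_inv x E P s (y s)) has_vector_derivative z') (at t)"
proof -
  have E': "bounded_linear E" and P': "bounded_linear P"
    using E P by (simp_all add: linear_conv_bounded_linear)
  have "((\<lambda>s. transpose (mexp (s *\<^sub>R \<xi>1))) has_vector_derivative transpose (\<xi>1 ** mexp (t *\<^sub>R \<xi>1))) (at t)"
    by (rule bounded_linear.has_vector_derivative[OF bounded_linear_transpose has_vector_derivative_mexp])
  from has_vector_derivative_matrix_mult[OF has_vector_derivative_matrix_mult[OF this y]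
      has_vector_derivative_mexp]
  obtain u' where "((\<lambda>s. Phi (g_inv s) (y s)) has_vector_derivative u') (at t)"
    by (auto simp: Phi_def)
  from bounded_linear.has_vector_derivative[OF E' has_vector_derivative_endo_exp_apply[OF
        bounded_linear.has_vector_derivative[OF P' this], of "- x"]]
  show ?thesis by (auto simp: moving_frame_inv_def)
qed

definition tangent_generator :: "((real^'n^'n) \<times> (real^'k^'k)) endo" where
  "tangent_generator = endo_of (\<lambda>\<zeta>. (- 1 / 2) *\<^sub>R pr_p X (ad (\<xi>1, \<xi>2) \<zeta>))"

abbreviation "tangent_frame \<equiv> moving_frame tangent_generator (tan_of_p X) (p_of_tan X)"
abbreviation "tangent_frame_inv \<equiv> moving_frame_inv tangent_generator (tan_of_p X) (p_of_tan X)"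

lemma endo_apply_tangent_generator:
  "endo_apply tangent_generator \<zeta> = (- 1 / 2) *\<^sub>R pr_p X (ad (\<xi>1, \<xi>2) \<zeta>)"
proof -
  have "linear (\<lambda>\<zeta>. (- 1 / 2) *\<^sub>R pr_p X (ad (\<xi>1, \<xi>2) \<zeta>))"
    by (rule linearI) (simp_all add: linear_add[OF linear_ad] linear_add[OF linear_pr_p]
        linear_scale[OF linear_ad] linear_scale[OF linear_pr_p] scaleR_add_right)
  then show ?thesis by (simp add: tangent_generator_def endo_apply_endo_of)
qed

lemma tangent_generator_in_pX:
  assumes "w \<in> pX X" shows "endo_apply tangent_generator w \<in> pX X"
proof -
  have "pr_p X (ad (\<xi>1, \<xi>2) w) \<in> pX X"
    using pX_skew[OF assms] pX_skew[OF xi_in_pX] ad_skew[of "(\<xi>1, \<xi>2)" w]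
    by (simp add: pr_p_in_pX)
  then show ?thesis unfolding endo_apply_tangent_generator by (rule subspace_mul[OF subspace_pX])
qed

lemma tangent_generator_skew:
  assumes u: "u \<in> pX X" and v: "v \<in> pX X"
  shows "g_inner (endo_apply tangent_generator u) v + g_inner u (endo_apply tangent_generator v) = 0"
proof -
  have "g_inner (pr_p X (ad (\<xi>1, \<xi>2) w)) w' = g_inner (ad (\<xi>1, \<xi>2) w) w'"
    if "w \<in> pX X" "w' \<in> pX X" for w w'
    using pX_skew[OF that(1)] pX_skew[OF xi_in_pX] ad_skew[of "(\<xi>1, \<xi>2)" w]
    by (intro g_inner_pr_p that(2)) auto
  then have "g_inner (pr_p X (ad (\<xi>1, \<xi>2) u)) v + g_inner u (pr_p X (ad (\<xi>1, \<xi>2) v))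
      = g_inner (ad (\<xi>1, \<xi>2) u) v + g_inner u (ad (\<xi>1, \<xi>2) v)"
    using u v by (simp add: g_inner_commute[of u])
  also have "\<dots> = 0" by (rule g_inner_ad_skew)
  finally show ?thesis
    by (simp only: endo_apply_tangent_generator bounded_bilinear.scaleR_left[OF bounded_bilinear_g_inner]
        bounded_bilinear.scaleR_right[OF bounded_bilinear_g_inner] flip: distrib_left) simp
qed

lemma exp_tangent_generator_in_pX:
  "w \<in> pX X \<Longrightarrow> endo_apply (exp (c *\<^sub>R tangent_generator)) w \<in> pX X"
  by (rule endo_exp_apply_in_subspace[OF subspace_pX])
    (simp_all add: subspace_mul[OF subspace_pX] tangent_generator_in_pX)

lemma tangent_frame_in_tanSt:
  "V \<in> tanSt X \<Longrightarrow> tangent_frame t V \<in> tanSt (Phi (g t) X)"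
  unfolding moving_frame_def
  using pX_skew[OF exp_tangent_generator_in_pX[OF p_of_tan_in_pX]]
  by (intro Phi_in_tanSt orthogonal_g tan_of_p_in_tanSt) auto

lemma tangent_frame_inverse:
  "V \<in> tanSt X \<Longrightarrow> tangent_frame_inv t (tangent_frame t V) = V"
  by (simp add: moving_frame_def moving_frame_inv_def Phi_g_inv_g p_of_tan_tan_of_p
      exp_tangent_generator_in_pX p_of_tan_in_pX tan_of_p_p_of_tan)

lemma tangent_frame_onto:
  assumes W: "W \<in> tanSt (Phi (g t) X)"
  shows "tangent_frame_inv t W \<in> tanSt X" "tangent_frame t (tangent_frame_inv t W) = W"
proof -
  have W': "Phi (g_inv t) W \<in> tanSt X"
    using Phi_in_tanSt[of "transpose (mexp (t *\<^sub>R \<xi>1))" W _ "transpose (mexp (t *\<^sub>R \<xi>2))", OF _ W]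
    by (simp add: orthogonal_g Phi_g_inv_g)
  have u: "endo_apply (exp (- (t *\<^sub>R tangent_generator))) (p_of_tan X (Phi (g_inv t) W)) \<in> pX X"
    using exp_tangent_generator_in_pX[OF p_of_tan_in_pX[OF W'], of "- t"] by simp
  show "tangent_frame_inv t W \<in> tanSt X"
    unfolding moving_frame_inv_def using pX_skew[OF u] by (intro tan_of_p_in_tanSt) auto
  show "tangent_frame t (tangent_frame_inv t W) = W"
    by (simp add: moving_frame_def moving_frame_inv_def p_of_tan_tan_of_p[OF u]
        tan_of_p_p_of_tan[OF W'] Phi_g_inv_g)
qed

lemma tangent_frame_inner:
  assumes u: "u \<in> tanSt X" and v: "v \<in> tanSt X"
  shows "tangent_frame t u \<bullet> tangent_frame t v = u \<bullet> v"
proof -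
  let ?e = "\<lambda>w. endo_apply (exp (t *\<^sub>R tangent_generator)) (p_of_tan X w)"
  have "2 * (tangent_frame t u \<bullet> tangent_frame t v) = 2 * (tan_of_p X (?e u) \<bullet> tan_of_p X (?e v))"
    by (simp add: moving_frame_def Phi_inner[OF orthogonal_g])
  also have "\<dots> = g_inner (?e u) (?e v)"
    using exp_tangent_generator_in_pX[OF p_of_tan_in_pX] u v
    by (simp add: g_inner_eq_inner_tan_of_p)
  also have "\<dots> = g_inner (p_of_tan X u) (p_of_tan X v)"
    by (rule endo_exp_apply_preserves_bilinear[OF bounded_bilinear_g_inner subspace_pX
          tangent_generator_in_pX tangent_generator_skew p_of_tan_in_pX[OF u] p_of_tan_in_pX[OF v]])
  also have "\<dots> = 2 * (u \<bullet> v)" by (rule g_inner_p_of_tan[OF u v])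
  finally show ?thesis by simp
qed

lemma tangent_frame_drift_in_orth_tanSt:
  assumes V: "V \<in> tanSt X"
  shows "moving_frame_drift tangent_generator (tan_of_p X) (p_of_tan X) t V
    \<in> orth (tanSt (Phi (g t) X))"
proof -
  define w where "w = endo_apply (exp (t *\<^sub>R tangent_generator)) (p_of_tan X V)"
  have w: "w \<in> pX X" unfolding w_def by (rule exp_tangent_generator_in_pX[OF p_of_tan_in_pX[OF V]])
  have "f_op (\<xi>1, \<xi>2) (tan_of_p X w) + tan_of_p X (endo_apply tangent_generator w)
      = (1/2) *\<^sub>R (2 *\<^sub>R f_op (\<xi>1, \<xi>2) (tan_of_p X (fst w, snd w))
          - tan_of_p X (ad (\<xi>1, \<xi>2) (fst w, snd w)))"
    by (simp add: endo_apply_tangent_generator tan_of_p_pr_p linear_scale[OF linear_tan_of_p]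
        linear_neg[OF linear_tan_of_p] algebra_simps)
  also have "\<dots> \<in> orth (tanSt X)"
    using w by (intro subspace_mul[OF subspace_orth] f_op_tan_of_p_ad_in_orth_tanSt xi_in_pX) simp
  finally show ?thesis
    unfolding moving_frame_drift_def Let_def w_def[symmetric]
    by (rule Phi_in_orth_tanSt[OF orthogonal_g])
qed

definition normal_generator :: "(real^'k^'n) endo" where
  "normal_generator = endo_of (\<lambda>W. - PperpX X (f_op (\<xi>1, \<xi>2) W))"

abbreviation "normal_frame \<equiv> moving_frame normal_generator id id"
abbreviation "normal_frame_inv \<equiv> moving_frame_inv normal_generator id id"

lemma endo_apply_normal_generator: "endo_apply normal_generator W = - PperpX X (f_op (\<xi>1, \<xi>2) W)"
proof -
  have "linear (\<lambda>W. - PperpX X (f_op (\<xi>1, \<xi>2) W))"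
    by (rule linearI) (simp_all add: linear_add[OF linear_f_op] linear_add[OF linear_PperpX]
        linear_scale[OF linear_f_op] linear_scale[OF linear_PperpX])
  then show ?thesis by (simp add: normal_generator_def endo_apply_endo_of)
qed

lemma normal_generator_in_orth_tanSt: "endo_apply normal_generator W \<in> orth (tanSt X)"
  unfolding endo_apply_normal_generator by (rule subspace_neg[OF subspace_orth PperpX_in_orth_tanSt])

lemma normal_generator_skew:
  assumes W: "W \<in> orth (tanSt X)" and W': "W' \<in> orth (tanSt X)"
  shows "endo_apply normal_generator W \<bullet> W' + W \<bullet> endo_apply normal_generator W' = 0"
proof -
  have "PperpX X (f_op (\<xi>1, \<xi>2) W) \<bullet> W' = f_op (\<xi>1, \<xi>2) W \<bullet> W'"
    using PperpX_self_adjoint PperpX_orth_tanSt[OF W'] by metis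
  moreover have "W \<bullet> PperpX X (f_op (\<xi>1, \<xi>2) W') = W \<bullet> f_op (\<xi>1, \<xi>2) W'"
    using PperpX_self_adjoint PperpX_orth_tanSt[OF W] by metis
  ultimately show ?thesis
    using f_op_skew_adjoint[OF xi_skew, of W W'] by (simp add: endo_apply_normal_generator)
qed

lemma exp_normal_generator_in_orth_tanSt:
  "W \<in> orth (tanSt X) \<Longrightarrow> endo_apply (exp (c *\<^sub>R normal_generator)) W \<in> orth (tanSt X)"
  by (rule endo_exp_apply_in_subspace[OF subspace_orth])
    (simp_all add: subspace_mul[OF subspace_orth] normal_generator_in_orth_tanSt)

lemma normal_frame_in_orth_tanSt:
  "W \<in> orth (tanSt X) \<Longrightarrow> normal_frame t W \<in> orth (tanSt (Phi (g t) X))"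
  unfolding moving_frame_def
  by (simp add: Phi_in_orth_tanSt orthogonal_g exp_normal_generator_in_orth_tanSt)

lemma normal_frame_inverse: "normal_frame_inv t (normal_frame t W) = W"
  by (simp add: moving_frame_def moving_frame_inv_def Phi_g_inv_g)

lemma normal_frame_onto:
  assumes W: "W \<in> orth (tanSt (Phi (g t) X))"
  shows "normal_frame_inv t W \<in> orth (tanSt X)" "normal_frame t (normal_frame_inv t W) = W"
proof -
  have "Phi (g_inv t) W \<in> orth (tanSt X)"
    using Phi_in_orth_tanSt[of "transpose (mexp (t *\<^sub>R \<xi>1))" "transpose (mexp (t *\<^sub>R \<xi>2))", OF _ _ W]
    by (simp add: orthogonal_g Phi_g_inv_g)
  then show "normal_frame_inv t W \<in> orth (tanSt X)"
    using exp_normal_generator_in_orth_tanSt[of _ "- t"] by (simp add: moving_frame_inv_def)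
  show "normal_frame t (normal_frame_inv t W) = W"
    by (simp add: moving_frame_def moving_frame_inv_def Phi_g_inv_g)
qed

lemma normal_frame_inner:
  assumes "u \<in> orth (tanSt X)" "v \<in> orth (tanSt X)"
  shows "normal_frame t u \<bullet> normal_frame t v = u \<bullet> v"
  unfolding moving_frame_def id_def Phi_inner[OF orthogonal_g]
  by (rule endo_exp_apply_preserves_bilinear[OF bounded_bilinear_inner subspace_orth
        normal_generator_in_orth_tanSt normal_generator_skew assms])

lemma normal_frame_drift_in_tanSt:
  "moving_frame_drift normal_generator id id t W \<in> orth (orth (tanSt (Phi (g t) X)))"
proof -
  define w where "w = endo_apply (exp (t *\<^sub>R normal_generator)) W"
  have "f_op (\<xi>1, \<xi>2) w + endo_apply normal_generator w \<in> tanSt X"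
    using diff_PperpX_in_tanSt by (simp add: endo_apply_normal_generator)
  then have "moving_frame_drift normal_generator id id t W \<in> tanSt (Phi (g t) X)"
    unfolding moving_frame_drift_def Let_def w_def[symmetric] id_def
    by (rule Phi_in_tanSt[OF orthogonal_g(1)])
  then show ?thesis by (simp add: orth_orth[OF subspace_tanSt])
qed

lemma has_vector_derivative_Phi_g:
  "((\<lambda>s. Phi (g s) V) has_vector_derivative Phi (g t) (f_op (\<xi>1, \<xi>2) V)) (at t)"
  by (rule has_vector_derivative_eq_rhs[OF
        has_vector_derivative_Phi_mexp[OF xi_skew(2) has_vector_derivative_const]]) simp

lemma development_curve_eq_Phi: "mexp (t *\<^sub>R \<xi>1) ** X ** mexp (- t *\<^sub>R \<xi>2) = Phi (g t) X"
  by (simp add: Phi_def transpose_mexp xi_skew)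

lemma tangent_frame_velocity:
  "tangent_frame t (\<xi>1 ** X - X ** \<xi>2) = Phi (g t) (\<xi>1 ** X - X ** \<xi>2)"
proof -
  have p: "p_of_tan X (\<xi>1 ** X - X ** \<xi>2) = (\<xi>1, \<xi>2)"
    using p_of_tan_tan_of_p[OF xi_in_pX] by (simp add: tan_of_p_def)
  have "endo_apply (t *\<^sub>R tangent_generator) (\<xi>1, \<xi>2) = 0"
    by (simp add: endo_apply_tangent_generator ad_def zero_prod_def[symmetric]
        linear_0[OF linear_pr_p])
  then show ?thesis
    by (simp add: moving_frame_def p endo_exp_apply_eq_self tan_of_p_def)
qed

lemma extrinsic_rolling_frames:
  assumes I: "open I"
    and A: "\<And>t V. V \<in> tanSt X \<Longrightarrow> A t V = tangent_frame t V"
    and C: "\<And>t V. C t V = normal_frame t V"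
  shows "extrinsic_rolling (tanSt X) (\<lambda>_. tanSt X) Stiefel tanSt I
    (\<lambda>t. t *\<^sub>R (\<xi>1 ** X - X ** \<xi>2)) (\<lambda>t. Phi (g t) X) A C"
  unfolding extrinsic_rolling_def
proof (intro conjI ballI allI impI)
  fix t
  have V0: "\<xi>1 ** X - X ** \<xi>2 \<in> tanSt X"
    using tan_of_p_in_tanSt[of "(\<xi>1, \<xi>2)"] pX_skew[OF xi_in_pX] by (simp add: tan_of_p_def)
  then show "t *\<^sub>R (\<xi>1 ** X - X ** \<xi>2) \<in> tanSt X" by (rule subspace_mul[OF subspace_tanSt])
  show "Phi (g t) X \<in> Stiefel" by (rule Phi_in_Stiefel[OF orthogonal_g in_Stiefel])
  show "lin_isom_on (A t) (tanSt X) (tanSt (Phi (g t) X))"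
    using tangent_frame_in_tanSt tangent_frame_onto tangent_frame_inner A
    by (intro lin_isom_onI[OF subspace_tanSt linear_moving_frame[OF linear_tan_of_p linear_p_of_tan]])
      blast+
  show "lin_isom_on (C t) (orth (tanSt X)) (orth (tanSt (Phi (g t) X)))"
    using normal_frame_in_orth_tanSt normal_frame_onto normal_frame_inner C
    by (intro lin_isom_onI[OF subspace_orth linear_moving_frame[OF linear_id linear_id]]) blast+
  show "\<exists>\<alpha>' \<alpha>h'. \<forall>t\<in>I. ((\<lambda>t. t *\<^sub>R (\<xi>1 ** X - X ** \<xi>2)) has_vector_derivative \<alpha>' t) (at t within I) \<and>
      ((\<lambda>t. Phi (g t) X) has_vector_derivative \<alpha>h' t) (at t within I) \<and> \<alpha>h' t = A t (\<alpha>' t)"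
  proof (intro exI ballI conjI)
    fix t
    show "((\<lambda>t. t *\<^sub>R (\<xi>1 ** X - X ** \<xi>2)) has_vector_derivative \<xi>1 ** X - X ** \<xi>2) (at t within I)"
      using bounded_linear.has_vector_derivative[OF bounded_linear_scaleR_left
          has_vector_derivative_id, of "\<xi>1 ** X - X ** \<xi>2"] by simp
    show "((\<lambda>t. Phi (g t) X) has_vector_derivative Phi (g t) (\<xi>1 ** X - X ** \<xi>2)) (at t within I)"
      using has_vector_derivative_at_within[OF has_vector_derivative_Phi_g[of X]]
      by (simp add: f_op_def)
    show "Phi (g t) (\<xi>1 ** X - X ** \<xi>2) = A t (\<xi>1 ** X - X ** \<xi>2)"
      by (simp add: A V0 tangent_frame_velocity)
  qed
next
  fix Z assume "\<forall>t\<in>I. Z t \<in> tanSt X"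
  then show "parallel_along tanSt I (\<lambda>t. Phi (g t) X) (\<lambda>t. A t (Z t)) =
      parallel_along (\<lambda>_. tanSt X) I (\<lambda>t. t *\<^sub>R (\<xi>1 ** X - X ** \<xi>2)) Z"
    unfolding parallel_along_def
    using I has_vector_derivative_moving_frame[OF linear_tan_of_p linear_p_of_tan]
      moving_frame_inv_differentiable[OF linear_tan_of_p linear_p_of_tan]
      linear_moving_frame[OF linear_tan_of_p linear_p_of_tan]
    by (intro parallel_transport_iff[where F = tangent_frame and G = tangent_frame_inv
          and F' = "moving_frame_drift tangent_generator (tan_of_p X) (p_of_tan X)"])
      (auto simp: subspace_tanSt tangent_frame_inverse tangent_frame_in_tanSt
        tangent_frame_drift_in_orth_tanSt A)
next
  fix Z assume "\<forall>t\<in>I. Z t \<in> orth (tanSt X)"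
  then show "normal_parallel_along tanSt I (\<lambda>t. Phi (g t) X) (\<lambda>t. C t (Z t)) =
      normal_parallel_along (\<lambda>_. tanSt X) I (\<lambda>t. t *\<^sub>R (\<xi>1 ** X - X ** \<xi>2)) Z"
    unfolding normal_parallel_along_def
    using I has_vector_derivative_moving_frame[OF linear_id linear_id]
      moving_frame_inv_differentiable[OF linear_id linear_id] linear_moving_frame[OF linear_id linear_id]
    by (intro parallel_transport_iff[where F = normal_frame and G = normal_frame_inv
          and F' = "moving_frame_drift normal_generator id id"])
      (auto simp: subspace_orth normal_frame_inverse normal_frame_in_orth_tanSt
        normal_frame_drift_in_tanSt C)
qed

lemma geodesic_development_curve: "geodesic_St I (\<lambda>t. Phi (g t) X)"
  unfolding geodesic_St_def
proof (intro conjI ballI exI)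
  fix t
  show "Phi (g t) X \<in> Stiefel" by (rule Phi_in_Stiefel[OF orthogonal_g in_Stiefel])
  show "((\<lambda>t. Phi (g t) X) has_vector_derivative Phi (g t) (f_op (\<xi>1, \<xi>2) X)) (at t within I)"
    using has_vector_derivative_Phi_g has_vector_derivative_at_within by blast
  show "((\<lambda>t. Phi (g t) (f_op (\<xi>1, \<xi>2) X)) has_vector_derivative
      Phi (g t) (f_op (\<xi>1, \<xi>2) (f_op (\<xi>1, \<xi>2) X))) (at t within I)"
    using has_vector_derivative_Phi_g has_vector_derivative_at_within by blast
  show "Phi (g t) (f_op (\<xi>1, \<xi>2) (f_op (\<xi>1, \<xi>2) X)) \<in> orth (tanSt (Phi (g t) X))"
    by (rule Phi_in_orth_tanSt[OF orthogonal_g f_op_f_op_in_orth_tanSt[OF xi_in_pX]])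
qed

lemma inv_into_frechet_derivative_iota_pi:
  assumes V: "V \<in> tanSt X"
  shows "inv_into (pX X) (frechet_derivative (iota_pi X) (at (mat 1, mat 1))) V = p_of_tan X V"
proof -
  have d: "frechet_derivative (iota_pi X) (at (mat 1, mat 1)) w = tan_of_p X w" if "w \<in> pX X" for w
    using pX_skew[OF that] by (simp add: frechet_derivative_iota_pi tan_of_p_def skew_iff)
  have "inj_on (tan_of_p X) (pX X)"
    by (metis inj_onI p_of_tan_tan_of_p)
  then have "inj_on (frechet_derivative (iota_pi X) (at (mat 1, mat 1))) (pX X)"
    using d by (simp add: inj_on_def)
  then show ?thesis
    using p_of_tan_in_pX[OF V] d tan_of_p_p_of_tan[OF V] by (intro inv_into_f_eq) auto
qed

lemma rolling_tangent_map_eq_tangent_frame: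
  assumes V: "V \<in> tanSt X"
  shows "frechet_derivative (iota_pi X) (at (mexp (t *\<^sub>R \<xi>1), mexp (t *\<^sub>R \<xi>2)))
          (frechet_derivative (gmul (mexp (t *\<^sub>R \<xi>1), mexp (t *\<^sub>R \<xi>2))) (at (mat 1, mat 1))
            (op_exp (\<lambda>\<zeta>. (- t / 2) *\<^sub>R pr_p X (ad (\<xi>1, \<xi>2) \<zeta>))
              (inv_into (pX X) (frechet_derivative (iota_pi X) (at (mat 1, mat 1))) V)))
    = tangent_frame t V"
proof -
  have L: "linear (\<lambda>\<zeta>. (- t / 2) *\<^sub>R pr_p X (ad (\<xi>1, \<xi>2) \<zeta>))"
    by (rule linearI) (simp_all add: linear_add[OF linear_ad] linear_add[OF linear_pr_p]
        linear_scale[OF linear_ad] linear_scale[OF linear_pr_p] scaleR_add_right)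
  have gen: "endo_of (\<lambda>\<zeta>. (- t / 2) *\<^sub>R pr_p X (ad (\<xi>1, \<xi>2) \<zeta>)) = t *\<^sub>R tangent_generator"
    by (rule endo_eqI) (simp only: endo_apply_endo_of[OF L], simp add: endo_apply_tangent_generator)
  have op_exp_eq: "op_exp (\<lambda>\<zeta>. (- t / 2) *\<^sub>R pr_p X (ad (\<xi>1, \<xi>2) \<zeta>)) (p_of_tan X V)
      = endo_apply (exp (t *\<^sub>R tangent_generator)) (p_of_tan X V)"
    unfolding op_exp_eq_endo_exp[OF L] gen ..
  have "transpose (snd (endo_apply (exp (t *\<^sub>R tangent_generator)) (p_of_tan X V)))
      = - snd (endo_apply (exp (t *\<^sub>R tangent_generator)) (p_of_tan X V))"
    using pX_skew[OF exp_tangent_generator_in_pX[OF p_of_tan_in_pX[OF V]]] by (simp add: skew_iff)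
  then show ?thesis
    unfolding inv_into_frechet_derivative_iota_pi[OF V] op_exp_eq
    by (simp add: frechet_derivative_iota_pi frechet_derivative_gmul gmul_def moving_frame_def
        Phi_def tan_of_p_def matrix_transpose_mul matrix_distrib matrix_mul_assoc)
qed

lemma rolling_normal_map_eq_normal_frame:
  "Phi (mexp (t *\<^sub>R \<xi>1), mexp (t *\<^sub>R \<xi>2)) (op_exp (\<lambda>W. (- t) *\<^sub>R PperpX X (f_op (\<xi>1, \<xi>2) W)) V)
    = normal_frame t V"
proof -
  have L: "linear (\<lambda>W. (- t) *\<^sub>R PperpX X (f_op (\<xi>1, \<xi>2) W))"
    by (rule linearI) (simp_all add: linear_add[OF linear_f_op] linear_add[OF linear_PperpX]
        linear_scale[OF linear_f_op] linear_scale[OF linear_PperpX] scaleR_add_right)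
  have gen: "endo_of (\<lambda>W. (- t) *\<^sub>R PperpX X (f_op (\<xi>1, \<xi>2) W)) = t *\<^sub>R normal_generator"
    by (rule endo_eqI) (simp only: endo_apply_endo_of[OF L], simp add: endo_apply_normal_generator)
  show ?thesis unfolding op_exp_eq_endo_exp[OF L] gen by (simp add: moving_frame_def)
qed

end

theorem corollary5p19:
  fixes X :: "real^'k^'n" and \<xi>1 :: "real^'n^'n" and \<xi>2 :: "real^'k^'k"
    and I :: "real set"
  assumes "(\<xi>1, \<xi>2) \<in> pX X"
    and "X \<in> Stiefel"
    and "is_interval I" and "open I"
  shows "extrinsic_rolling (tanSt X) (\<lambda>_. tanSt X) Stiefel tanSt I
           (\<lambda>t. t *\<^sub>R (\<xi>1 ** X - X ** \<xi>2))
           (\<lambda>t. mexp (t *\<^sub>R \<xi>1) ** X ** mexp (- t *\<^sub>R \<xi>2))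
           (\<lambda>t V. frechet_derivative (iota_pi X) (at (mexp (t *\<^sub>R \<xi>1), mexp (t *\<^sub>R \<xi>2)))
                    (frechet_derivative (gmul (mexp (t *\<^sub>R \<xi>1), mexp (t *\<^sub>R \<xi>2)))
                        (at (mat 1, mat 1))
                      (op_exp (\<lambda>\<zeta>. (- t / 2) *\<^sub>R pr_p X (ad (\<xi>1, \<xi>2) \<zeta>))
                        (inv_into (pX X) (frechet_derivative (iota_pi X) (at (mat 1, mat 1))) V))))
           (\<lambda>t V. Phi (mexp (t *\<^sub>R \<xi>1), mexp (t *\<^sub>R \<xi>2))
                    (op_exp (\<lambda>W. (- t) *\<^sub>R PperpX X (f_op (\<xi>1, \<xi>2) W)) V))
         \<and> geodesic_St I (\<lambda>t. mexp (t *\<^sub>R \<xi>1) ** X ** mexp (- t *\<^sub>R \<xi>2))"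
proof -
  interpret stiefel_rolling X \<xi>1 \<xi>2
    using assms(1,2) by unfold_locales (simp_all add: Stiefel_def)
  show ?thesis
    unfolding development_curve_eq_Phi
    using extrinsic_rolling_frames[OF assms(4) rolling_tangent_map_eq_tangent_frame
        rolling_normal_map_eq_normal_frame]
      geodesic_development_curve
    by blast
qed

end
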